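(* In the curve-version universal shuffle algebra, for integers $n_1\ge n_2\ge\cdots\ge n_k$, $$z_1^{n_1}*\cdots*z_1^{n_k}=z_1^{n_1}\cdots z_k^{n_k}\sum_{\sigma\text{ admissible}}\ \prod_{i,j:\ \sigma(i)<\sigma(j)}(1-\Delta_{ij})\ +\ \dots,$$ where $\dots$ denotes a combination of monomials in $z_1,\dots,z_k$ of lower lexicographic order than $z_1^{n_1}\cdots z_k^{n_k}$, and a permutation $\sigma\in S(k)$ is called admissible if $i>j$ and $\sigma(i)<\sigma(j)$ imply $n_i=n_j$.
   Context: For $k\in\mathbb{N}$, $\mathbb{F}_k$ is the commutative ring generated over $\mathbb{Z}$ by $\Delta_{ij}$ ($1\le i\ne j\le k$) subject to $\Delta_{ij}=\Delta_{ji}$ and $\Delta_{ij}\cdot P=0$ for every expression $P$ anti-symmetric in $i,j$. $S(k)$ acts on $\mathbb{F}_k$ by permuting indices; $\iota_{\mathrm{first}}:\mathbb{F}_k\to\mathbb{F}_{k+k'}$, $\Delta_{ij}\mapsto\Delta_{ij}$; $\iota_{\mathrm{last}}:\mathbb{F}_{k'}\to\mathbb{F}_{k+k'}$, $\Delta_{ij}\mapsto\Delta_{i+k,j+k}$. $\zeta_{ij}(x)=1+\Delta_{ij}\frac{x}{1-x}$. The shuffle product on $\bigoplus_k\mathbb{F}_k(z_1,\dots,z_k)^{\mathrm{Sym}}$ (functions invariant under simultaneous permutation of variables and indices) is $$R*R'=\mathrm{Sym}\Big[\iota_{\mathrm{first}}(R)(z_1,..,z_k)\,\iota_{\mathrm{last}}(R')(z_{k+1},..,z_{k+k'})\prod_{1\le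 i\le k<j\le k+k'}\zeta_{ij}(z_i/z_j)\Big],$$ $\mathrm{Sym}\,F=\sum_{\sigma\in S(k+k')}(\sigma\circ F)(z_{\sigma(1)},\dots,z_{\sigma(k+k')})$, with $\sigma$ acting on coefficients as well. Elements $z_1^{n_1}*\cdots*z_1^{n_k}$ are Laurent polynomials in $z_1,\dots,z_k$ with coefficients in $\mathbb{F}_k$. *)

theory Defs
  imports "HOL-Library.Poly_Mapping" "HOL-Combinatorics.Permutations" "HOL-Combinatorics.Transposition"
begin

text \<open>Monomials in the variables Delta_ij are finitely supported maps from index pairs
  to exponents; the variable Delta_ij = Delta_ji is stored under the key (min i j, max i j).
  dpoly is the polynomial ring Z[Delta_ij]; lpoly is the ring of Laurent polynomials in
  z_1, z_2, ... (exponent vectors nat =>0 int) with coefficients in dpoly.\<close>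

type_synonym dpoly = "((nat \<times> nat) \<Rightarrow>\<^sub>0 nat) \<Rightarrow>\<^sub>0 int"
type_synonym lpoly = "(nat \<Rightarrow>\<^sub>0 int) \<Rightarrow>\<^sub>0 dpoly"

definition Delta :: "nat \<Rightarrow> nat \<Rightarrow> dpoly" where
  "Delta i j = Poly_Mapping.single (Poly_Mapping.single (min i j, max i j) 1) 1"

definition zvar :: "nat \<Rightarrow> lpoly" where
  "zvar i = Poly_Mapping.single (Poly_Mapping.single i 1) 1"

definition const :: "dpoly \<Rightarrow> lpoly" where
  "const c = Poly_Mapping.single 0 c"

definition zexp :: "nat \<Rightarrow> (nat \<Rightarrow> int) \<Rightarrow> (nat \<Rightarrow>\<^sub>0 int)" where
  "zexp k n = (\<Sum>i\<in>{1..k}. Poly_Mapping.single i (n i))"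

definition zmono :: "nat \<Rightarrow> (nat \<Rightarrow> int) \<Rightarrow> lpoly" where
  "zmono k n = Poly_Mapping.single (zexp k n) 1"

definition act_dmon :: "(nat \<Rightarrow> nat) \<Rightarrow> ((nat \<times> nat) \<Rightarrow>\<^sub>0 nat) \<Rightarrow> ((nat \<times> nat) \<Rightarrow>\<^sub>0 nat)" where
  "act_dmon \<sigma> m = (\<Sum>p\<in>Poly_Mapping.keys m.
      Poly_Mapping.single (min (\<sigma> (fst p)) (\<sigma> (snd p)), max (\<sigma> (fst p)) (\<sigma> (snd p))) (Poly_Mapping.lookup m p))"

definition act_d :: "(nat \<Rightarrow> nat) \<Rightarrow> dpoly \<Rightarrow> dpoly" where
  "act_d \<sigma> P = (\<Sum>m\<in>Poly_Mapping.keys P. Poly_Mapping.single (act_dmon \<sigma> m) (Poly_Mapping.lookup P m))"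

definition act_zexp :: "(nat \<Rightarrow> nat) \<Rightarrow> (nat \<Rightarrow>\<^sub>0 int) \<Rightarrow> (nat \<Rightarrow>\<^sub>0 int)" where
  "act_zexp \<sigma> e = (\<Sum>i\<in>Poly_Mapping.keys e. Poly_Mapping.single (\<sigma> i) (Poly_Mapping.lookup e i))"

definition act :: "(nat \<Rightarrow> nat) \<Rightarrow> lpoly \<Rightarrow> lpoly" where
  "act \<sigma> F = (\<Sum>e\<in>Poly_Mapping.keys F. Poly_Mapping.single (act_zexp \<sigma> e) (act_d \<sigma> (Poly_Mapping.lookup F e)))"

definition in_Fk :: "nat \<Rightarrow> dpoly \<Rightarrow> bool" where
  "in_Fk k P \<longleftrightarrow> (\<forall>m\<in>Poly_Mapping.keys P. \<forall>p\<in>Poly_Mapping.keys m. 1 \<le> fst p \<and> fst p < snd p \<and> snd p \<le> k)"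

inductive_set Fk_ideal :: "nat \<Rightarrow> dpoly set" for k :: nat where
  gen: "\<lbrakk>i \<in> {1..k}; j \<in> {1..k}; i \<noteq> j; in_Fk k P; act_d (Transposition.transpose i j) P = - P\<rbrakk>
          \<Longrightarrow> Delta i j * P \<in> Fk_ideal k"
| zero: "0 \<in> Fk_ideal k"
| add: "\<lbrakk>a \<in> Fk_ideal k; b \<in> Fk_ideal k\<rbrakk> \<Longrightarrow> a + b \<in> Fk_ideal k"
| mult: "a \<in> Fk_ideal k \<Longrightarrow> r * a \<in> Fk_ideal k"

definition Fk_eq :: "nat \<Rightarrow> lpoly \<Rightarrow> lpoly \<Rightarrow> bool" where
  "Fk_eq k F G \<longleftrightarrow> (\<forall>e. Poly_Mapping.lookup (F - G) e \<in> Fk_ideal k)"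

text \<open>A fraction (N, D) stands for N / D; all denominators occurring are products of
  differences z_j - z_i (non-zero-divisors), so equality of fractions is cross-multiplication.\<close>
type_synonym frac = "lpoly \<times> lpoly"

definition frac_eq :: "nat \<Rightarrow> frac \<Rightarrow> frac \<Rightarrow> bool" where
  "frac_eq k F G \<longleftrightarrow> Fk_eq k (fst F * snd G) (fst G * snd F)"

definition frac_of :: "lpoly \<Rightarrow> frac" where
  "frac_of L = (L, 1)"

definition frac_mult :: "frac \<Rightarrow> frac \<Rightarrow> frac" where
  "frac_mult F G = (fst F * fst G, snd F * snd G)"

definition frac_prod :: "('a \<Rightarrow> frac) \<Rightarrow> 'a set \<Rightarrow> frac" where
  "frac_prod f S = ((\<Prod>x\<in>S. fst (f x)), (\<Prod>x\<in>S. snd (f x)))"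

definition frac_sum :: "('a \<Rightarrow> frac) \<Rightarrow> 'a set \<Rightarrow> frac" where
  "frac_sum f S = ((\<Sum>x\<in>S. fst (f x) * (\<Prod>y\<in>S - {x}. snd (f y))), (\<Prod>y\<in>S. snd (f y)))"

definition act_frac :: "(nat \<Rightarrow> nat) \<Rightarrow> frac \<Rightarrow> frac" where
  "act_frac \<sigma> F = (act \<sigma> (fst F), act \<sigma> (snd F))"

definition Sym :: "nat \<Rightarrow> frac \<Rightarrow> frac" where
  "Sym k F = frac_sum (\<lambda>\<sigma>. act_frac \<sigma> F) {\<sigma>. \<sigma> permutes {1..k}}"

text \<open>zeta_ij(z_i/z_j) = 1 + Delta_ij (z_i/z_j)/(1 - z_i/z_j) = (z_j - z_i + Delta_ij z_i)/(z_j - z_i).\<close>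
definition zeta :: "nat \<Rightarrow> nat \<Rightarrow> frac" where
  "zeta i j = (zvar j - zvar i + const (Delta i j) * zvar i, zvar j - zvar i)"

definition pairs :: "nat \<Rightarrow> (nat \<times> nat) set" where
  "pairs k = {(i, j). 1 \<le> i \<and> i < j \<and> j \<le> k}"

text \<open>The k-fold shuffle product z_1^{n_1} * ... * z_1^{n_k}
  = Sym [ z_1^{n_1} ... z_k^{n_k} prod_{i<j} zeta_ij(z_i/z_j) ].\<close>
definition shuffle_monomials :: "nat \<Rightarrow> (nat \<Rightarrow> int) \<Rightarrow> frac" where
  "shuffle_monomials k n =
     Sym k (frac_mult (frac_of (zmono k n)) (frac_prod (\<lambda>(i, j). zeta i j) (pairs k)))"

definition admissible :: "nat \<Rightarrow> (nat \<Rightarrow> int) \<Rightarrow> (nat \<Rightarrow> nat) \<Rightarrow> bool" where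
  "admissible k n \<sigma> \<longleftrightarrow>
     (\<forall>i\<in>{1..k}. \<forall>j\<in>{1..k}. i > j \<and> \<sigma> i < \<sigma> j \<longrightarrow> n i = n j)"

definition lex_less :: "nat \<Rightarrow> (nat \<Rightarrow>\<^sub>0 int) \<Rightarrow> (nat \<Rightarrow> int) \<Rightarrow> bool" where
  "lex_less k e n \<longleftrightarrow>
     (\<exists>i\<in>{1..k}. (\<forall>j\<in>{1..<i}. Poly_Mapping.lookup e j = n j) \<and> Poly_Mapping.lookup e i < n i)"

definition lead_coeff_shuffle :: "nat \<Rightarrow> (nat \<Rightarrow> int) \<Rightarrow> dpoly" where
  "lead_coeff_shuffle k n =
     (\<Sum>\<sigma>\<in>{\<sigma>. \<sigma> permutes {1..k} \<and> admissible k n \<sigma>}.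
        \<Prod>(i, j)\<in>{(i, j) \<in> pairs k. \<sigma> i < \<sigma> j}. 1 - Delta i j)"

end

theory Submission
  imports Defs "HOL-Library.Product_Lexorder"
begin

text \<open>
  Write \<open>N = z\<^sup>n \<Prod>\<^bsub>i<j\<^esub> (z\<^sub>j - z\<^sub>i + \<Delta>\<^sub>i\<^sub>j z\<^sub>i)\<close> and \<open>V = \<Prod>\<^bsub>i<j\<^esub> (z\<^sub>j - z\<^sub>i)\<close>, so that the shuffle
  product is \<open>Sym (N / V)\<close>. Since \<open>\<sigma> V = sgn \<sigma> \<cdot> V\<close>, it equals \<open>A / V\<close> for the alternant
  \<open>A = \<Sum>\<^sub>\<sigma> sgn \<sigma> \<cdot> \<sigma> N\<close>. Modulo the relations of \<open>F\<^sub>k\<close>, \<open>A\<close> vanishes on each diagonal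
  \<open>z\<^sub>a = z\<^sub>b\<close>: there the terms of \<open>\<sigma>\<close> and \<open>(a b) \<circ> \<sigma>\<close> add up to \<open>\<Delta>\<^sub>a\<^sub>b\<close> times an expression
  that is anti-symmetric in \<open>a, b\<close>. As every \<open>z\<^sub>a - z\<^sub>b\<close> is a non-zero-divisor modulo the
  relations, \<open>A = V \<cdot> L\<close> for a Laurent polynomial \<open>L\<close> over \<open>F\<^sub>k\<close>, and the shuffle product is \<open>L\<close>.

  The leading coefficient of \<open>L\<close> is read off from lexicographically leading terms: \<open>V\<close> has
  leading term \<open>\<plusminus>z\<^sup>\<rho>\<close>, and \<open>\<sigma> N\<close> has leading exponent \<open>\<sigma>(n) + \<rho> \<le> n + \<rho>\<close>, with equality
  exactly when \<open>\<sigma>\<close> preserves \<open>n\<close>; for decreasing \<open>n\<close> these \<open>\<sigma>\<close> are the inverses of the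
  admissible permutations, and up to the sign of \<open>V\<close> their leading coefficients are the
  products of \<open>1 - \<Delta>\<^sub>i\<^sub>j\<close>.
\<close>

definition pm_push :: "('a \<Rightarrow> 'b) \<Rightarrow> ('c::zero \<Rightarrow> 'd::comm_monoid_add) \<Rightarrow> ('a \<Rightarrow>\<^sub>0 'c) \<Rightarrow> ('b \<Rightarrow>\<^sub>0 'd)" where
  "pm_push s \<phi> F = (\<Sum>e\<in>Poly_Mapping.keys F. Poly_Mapping.single (s e) (\<phi> (Poly_Mapping.lookup F e)))"

lemma poly_mapping_sum_singles:
  "F = (\<Sum>e\<in>Poly_Mapping.keys F. Poly_Mapping.single e (Poly_Mapping.lookup F e))"
  by (rule poly_mapping_eqI) (simp add: lookup_sum lookup_single when_def in_keys_iff)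

lemma mult_poly_mapping_as_sum:
  "F * G = (\<Sum>a\<in>Poly_Mapping.keys F. \<Sum>b\<in>Poly_Mapping.keys G.
      Poly_Mapping.single (a + b) (Poly_Mapping.lookup F a * Poly_Mapping.lookup G b))"
proof -
  have "F * G = (\<Sum>a\<in>Poly_Mapping.keys F. \<Sum>b\<in>Poly_Mapping.keys G.
      Poly_Mapping.single a (Poly_Mapping.lookup F a) * Poly_Mapping.single b (Poly_Mapping.lookup G b))"
    by (subst (1) poly_mapping_sum_singles, subst (2) poly_mapping_sum_singles) (simp add: sum_product)
  then show ?thesis by (simp add: mult_single)
qed

lemma lookup_mult_as_sum:
  "Poly_Mapping.lookup (F * G) e =
     (\<Sum>a\<in>Poly_Mapping.keys F. \<Sum>b\<in>Poly_Mapping.keys G. (Poly_Mapping.lookup F a * Poly_Mapping.lookup G b when e = a + b))"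
  by (subst mult_poly_mapping_as_sum) (simp add: lookup_sum lookup_single when_def eq_commute)

lemma lookup_single_mult:
  fixes F :: "('a::ab_group_add \<Rightarrow>\<^sub>0 'b::comm_ring_1)"
  shows "Poly_Mapping.lookup (Poly_Mapping.single u c * F) e = c * Poly_Mapping.lookup F (e - u)"
proof (cases "c = 0")
  case False
  have "Poly_Mapping.lookup (Poly_Mapping.single u c * F) e =
     (\<Sum>b\<in>Poly_Mapping.keys F. (c * Poly_Mapping.lookup F b when e = u + b))"
    using False by (simp add: lookup_mult_as_sum)
  also have "\<dots> = (\<Sum>b\<in>Poly_Mapping.keys F \<inter> {e - u}. c * Poly_Mapping.lookup F b)"
    by (rule sum.mono_neutral_cong_right) (auto simp: when_def algebra_simps)
  also have "\<dots> = c * Poly_Mapping.lookup F (e - u)"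
    by (cases "e - u \<in> Poly_Mapping.keys F") (auto simp: in_keys_iff)
  finally show ?thesis .
qed simp

lemma pm_push_superset:
  assumes "finite S" "Poly_Mapping.keys F \<subseteq> S" "\<phi> 0 = 0"
  shows "pm_push s \<phi> F = (\<Sum>e\<in>S. Poly_Mapping.single (s e) (\<phi> (Poly_Mapping.lookup F e)))"
  unfolding pm_push_def
  by (rule sum.mono_neutral_left) (use assms in \<open>auto simp: in_keys_iff\<close>)

lemma lookup_pm_push:
  "Poly_Mapping.lookup (pm_push s \<phi> F) x = (\<Sum>e\<in>{e\<in>Poly_Mapping.keys F. s e = x}. \<phi> (Poly_Mapping.lookup F e))"
  unfolding pm_push_def lookup_sum lookup_single
  by (rule sum.mono_neutral_cong_right) (auto simp: when_def)

lemma keys_pm_push: "Poly_Mapping.keys (pm_push s \<phi> F) \<subseteq> s ` Poly_Mapping.keys F"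
proof
  fix x assume "x \<in> Poly_Mapping.keys (pm_push s \<phi> F)"
  then have "{e\<in>Poly_Mapping.keys F. s e = x} \<noteq> {}"
    unfolding in_keys_iff lookup_pm_push by (metis sum.empty)
  then show "x \<in> s ` Poly_Mapping.keys F" by auto
qed

lemma pm_push_zero [simp]: "pm_push s \<phi> 0 = 0"
  by (simp add: pm_push_def)

lemma pm_push_single:
  assumes "\<phi> 0 = 0"
  shows "pm_push s \<phi> (Poly_Mapping.single e c) = Poly_Mapping.single (s e) (\<phi> c)"
  by (cases "c = 0") (auto simp: pm_push_def assms)

lemma pm_push_add:
  assumes "\<phi> 0 = 0" "\<And>a b. \<phi> (a + b) = \<phi> a + \<phi> b"
  shows "pm_push s \<phi> (F + G) = pm_push s \<phi> F + pm_push s \<phi> G"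
proof -
  let ?S = "Poly_Mapping.keys F \<union> Poly_Mapping.keys G"
  have "pm_push s \<phi> (F + G) = (\<Sum>e\<in>?S. Poly_Mapping.single (s e) (\<phi> (Poly_Mapping.lookup (F + G) e)))"
    by (rule pm_push_superset) (use assms keys_add[of F G] in auto)
  also have "\<dots> = (\<Sum>e\<in>?S. Poly_Mapping.single (s e) (\<phi> (Poly_Mapping.lookup F e))) +
        (\<Sum>e\<in>?S. Poly_Mapping.single (s e) (\<phi> (Poly_Mapping.lookup G e)))"
    by (simp add: lookup_add assms single_add sum.distrib)
  also have "\<dots> = pm_push s \<phi> F + pm_push s \<phi> G"
    by (simp add: pm_push_superset[symmetric] assms)
  finally show ?thesis .
qed

lemma pm_push_sum:
  assumes "\<phi> 0 = 0" "\<And>a b. \<phi> (a + b) = \<phi> a + \<phi> b"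
  shows "pm_push s \<phi> (\<Sum>i\<in>I. F i) = (\<Sum>i\<in>I. pm_push s \<phi> (F i))"
  by (induction I rule: infinite_finite_induct) (auto simp: pm_push_add[OF assms])

lemma pm_push_uminus:
  fixes F :: "'a \<Rightarrow>\<^sub>0 'c::ab_group_add"
  assumes "\<phi> 0 = 0" "\<And>a b. \<phi> (a + b) = (\<phi> a + \<phi> b :: 'd::ab_group_add)"
  shows "pm_push s \<phi> (- F) = - pm_push s \<phi> F"
  using pm_push_add[OF assms, of s F "- F"] by (simp add: minus_unique)

lemma pm_push_diff:
  fixes F :: "'a \<Rightarrow>\<^sub>0 'c::ab_group_add"
  assumes "\<phi> 0 = 0" "\<And>a b. \<phi> (a + b) = (\<phi> a + \<phi> b :: 'd::ab_group_add)"
  shows "pm_push s \<phi> (F - G) = pm_push s \<phi> F - pm_push s \<phi> G"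
  using pm_push_add[OF assms, of s F "- G"] pm_push_uminus[OF assms, of s G] by simp

lemma pm_push_mult:
  fixes F G :: "('a::comm_monoid_add \<Rightarrow>\<^sub>0 'c::comm_semiring_0)"
  assumes "\<phi> 0 = 0" "\<And>a b. \<phi> (a + b) = \<phi> a + \<phi> b" "\<And>a b. \<phi> (a * b) = (\<phi> a * \<phi> b :: 'd::comm_semiring_0)"
    and "\<And>a b. s (a + b) = s a + (s b :: 'b::comm_monoid_add)"
  shows "pm_push s \<phi> (F * G) = pm_push s \<phi> F * pm_push s \<phi> G"
proof -
  have "pm_push s \<phi> (F * G) = (\<Sum>a\<in>Poly_Mapping.keys F. \<Sum>b\<in>Poly_Mapping.keys G.
      Poly_Mapping.single (s a + s b) (\<phi> (Poly_Mapping.lookup F a) * \<phi> (Poly_Mapping.lookup G b)))"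
    by (subst mult_poly_mapping_as_sum) (simp add: pm_push_sum[OF assms(1,2)] pm_push_single assms)
  also have "\<dots> = pm_push s \<phi> F * pm_push s \<phi> G"
    by (simp add: pm_push_def sum_product mult_single)
  finally show ?thesis .
qed

lemma pm_push_one:
  assumes "\<phi> 0 = 0" "\<phi> 1 = 1" "s 0 = 0"
  shows "pm_push s \<phi> (1 :: 'a::zero \<Rightarrow>\<^sub>0 'c::zero_neq_one) = (1 :: 'b::zero \<Rightarrow>\<^sub>0 'd::{comm_monoid_add,zero_neq_one})"
  using pm_push_single[of \<phi> s 0 1] assms by simp

lemma pm_push_comp:
  assumes "\<phi> 0 = 0" "\<And>a b. \<phi> (a + b) = \<phi> a + \<phi> b" "\<psi> 0 = 0"
  shows "pm_push s \<phi> (pm_push t \<psi> F) = pm_push (s \<circ> t) (\<phi> \<circ> \<psi>) F"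
  unfolding pm_push_def[of t] by (simp add: pm_push_sum[OF assms(1,2)] pm_push_single assms) (simp add: pm_push_def)

lemma pm_push_cong:
  assumes "\<And>e. e \<in> Poly_Mapping.keys F \<Longrightarrow> s e = s' e"
    and "\<And>e. e \<in> Poly_Mapping.keys F \<Longrightarrow> \<phi> (Poly_Mapping.lookup F e) = \<phi>' (Poly_Mapping.lookup F e)"
  shows "pm_push s \<phi> F = pm_push s' \<phi>' F"
  unfolding pm_push_def using assms by (intro sum.cong) auto

lemma pm_push_id: "pm_push (\<lambda>x. x) (\<lambda>x. x) F = F"
  unfolding pm_push_def by (rule poly_mapping_sum_singles[symmetric])

lemma permutes_closed: "\<sigma> permutes S \<Longrightarrow> x \<in> S \<Longrightarrow> \<sigma> x \<in> S"
  by (simp add: permutes_in_image)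

definition act_pair :: "(nat \<Rightarrow> nat) \<Rightarrow> nat \<times> nat \<Rightarrow> nat \<times> nat" where
  "act_pair \<sigma> p = (min (\<sigma> (fst p)) (\<sigma> (snd p)), max (\<sigma> (fst p)) (\<sigma> (snd p)))"

lemma act_dmon_pm_push: "act_dmon \<sigma> m = pm_push (act_pair \<sigma>) (\<lambda>x. x) m"
  by (simp add: act_dmon_def pm_push_def act_pair_def)

lemma act_d_pm_push: "act_d \<sigma> P = pm_push (act_dmon \<sigma>) (\<lambda>x. x) P"
  by (simp add: act_d_def pm_push_def)

lemma act_zexp_pm_push: "act_zexp \<sigma> e = pm_push \<sigma> (\<lambda>x. x) e"
  by (simp add: act_zexp_def pm_push_def)

lemma act_pm_push: "act \<sigma> F = pm_push (act_zexp \<sigma>) (act_d \<sigma>) F"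
  by (simp add: act_def pm_push_def)

lemma act_dmon_add: "act_dmon \<sigma> (a + b) = act_dmon \<sigma> a + act_dmon \<sigma> b"
  unfolding act_dmon_pm_push by (rule pm_push_add) auto

lemma act_zexp_add: "act_zexp \<sigma> (a + b) = act_zexp \<sigma> a + act_zexp \<sigma> b"
  unfolding act_zexp_pm_push by (rule pm_push_add) auto

lemma act_dmon_zero [simp]: "act_dmon \<sigma> 0 = 0"
  by (simp add: act_dmon_pm_push)

lemma act_zexp_zero [simp]: "act_zexp \<sigma> 0 = 0"
  by (simp add: act_zexp_pm_push)

lemma act_d_zero [simp]: "act_d \<sigma> 0 = 0"
  by (simp add: act_d_pm_push)

lemma act_d_add: "act_d \<sigma> (a + b) = act_d \<sigma> a + act_d \<sigma> b"
  unfolding act_d_pm_push by (rule pm_push_add) auto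

lemma act_d_mult: "act_d \<sigma> (a * b) = act_d \<sigma> a * act_d \<sigma> b"
  unfolding act_d_pm_push by (rule pm_push_mult) (auto simp: act_dmon_add)

lemma act_d_one [simp]: "act_d \<sigma> 1 = 1"
  unfolding act_d_pm_push by (rule pm_push_one) auto

lemma act_d_diff: "act_d \<sigma> (a - b) = act_d \<sigma> a - act_d \<sigma> b"
  unfolding act_d_pm_push by (rule pm_push_diff) auto

lemma act_add: "act \<sigma> (a + b) = act \<sigma> a + act \<sigma> b"
  unfolding act_pm_push by (rule pm_push_add) (auto simp: act_d_add)

lemma act_mult: "act \<sigma> (a * b) = act \<sigma> a * act \<sigma> b"
  unfolding act_pm_push by (rule pm_push_mult) (auto simp: act_d_add act_d_mult act_zexp_add)

lemma act_one [simp]: "act \<sigma> 1 = 1"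
  unfolding act_pm_push by (rule pm_push_one) auto

lemma act_uminus: "act \<sigma> (- a) = - act \<sigma> a"
  unfolding act_pm_push by (rule pm_push_uminus) (auto simp: act_d_add)

lemma act_diff: "act \<sigma> (a - b) = act \<sigma> a - act \<sigma> b"
  unfolding act_pm_push by (rule pm_push_diff) (auto simp: act_d_add)

lemma act_prod: "act \<sigma> (\<Prod>i\<in>I. f i) = (\<Prod>i\<in>I. act \<sigma> (f i))"
  by (induction I rule: infinite_finite_induct) (auto simp: act_mult)

lemma act_power: "act \<sigma> (a ^ m) = act \<sigma> a ^ m"
  by (induction m) (auto simp: act_mult)

lemma act_zvar [simp]: "act \<sigma> (zvar i) = zvar (\<sigma> i)"
  by (simp add: zvar_def act_pm_push pm_push_single act_zexp_pm_push)

lemma act_const [simp]: "act \<sigma> (const c) = const (act_d \<sigma> c)"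
  by (simp add: const_def act_pm_push pm_push_single)

lemma act_d_Delta [simp]: "act_d \<sigma> (Delta i j) = Delta (\<sigma> i) (\<sigma> j)"
  by (simp add: Delta_def act_d_pm_push pm_push_single act_dmon_pm_push act_pair_def min_def max_def)

lemma Delta_sym: "Delta i j = Delta j i"
  by (simp add: Delta_def min.commute max.commute)

lemma act_pair_comp: "act_pair \<tau> (act_pair \<sigma> p) = act_pair (\<tau> \<circ> \<sigma>) p"
  by (auto simp: act_pair_def min_def max_def)

lemma act_dmon_comp: "act_dmon \<tau> (act_dmon \<sigma> m) = act_dmon (\<tau> \<circ> \<sigma>) m"
  unfolding act_dmon_pm_push by (subst pm_push_comp) (auto simp: comp_def act_pair_comp)

lemma act_d_comp: "act_d \<tau> (act_d \<sigma> P) = act_d (\<tau> \<circ> \<sigma>) P"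
  unfolding act_d_pm_push by (subst pm_push_comp) (auto simp: comp_def act_dmon_comp)

lemma act_zexp_comp: "act_zexp \<tau> (act_zexp \<sigma> e) = act_zexp (\<tau> \<circ> \<sigma>) e"
  unfolding act_zexp_pm_push by (subst pm_push_comp) (auto simp: comp_def)

lemma act_comp: "act \<tau> (act \<sigma> F) = act (\<tau> \<circ> \<sigma>) F"
  unfolding act_pm_push by (subst pm_push_comp) (auto simp: comp_def act_zexp_comp act_d_comp act_d_add)

lemma Fk_ideal_uminus: "a \<in> Fk_ideal k \<Longrightarrow> - a \<in> Fk_ideal k"
  using Fk_ideal.mult[of a k "-1"] by simp

lemma Fk_ideal_diff: "a \<in> Fk_ideal k \<Longrightarrow> b \<in> Fk_ideal k \<Longrightarrow> a - b \<in> Fk_ideal k"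
  using Fk_ideal.add[of a k "-b"] Fk_ideal_uminus by simp

lemma Fk_ideal_sum: "(\<And>i. i \<in> I \<Longrightarrow> f i \<in> Fk_ideal k) \<Longrightarrow> (\<Sum>i\<in>I. f i) \<in> Fk_ideal k"
  by (induction I rule: infinite_finite_induct) (auto intro: Fk_ideal.intros)

lemma Fk_ideal_when: "a \<in> Fk_ideal k \<Longrightarrow> (a when P) \<in> Fk_ideal k"
  by (cases P) (auto intro: Fk_ideal.intros)

lemma lookup_const_mult: "Poly_Mapping.lookup (const c * F) e = c * Poly_Mapping.lookup F e"
  by (simp add: const_def lookup_single_mult)

definition Fk_zero :: "nat \<Rightarrow> lpoly \<Rightarrow> bool" where
  "Fk_zero k F \<longleftrightarrow> (\<forall>e. Poly_Mapping.lookup F e \<in> Fk_ideal k)"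

lemma Fk_eq_Fk_zero: "Fk_eq k F G \<longleftrightarrow> Fk_zero k (F - G)"
  by (simp add: Fk_eq_def Fk_zero_def)

lemma Fk_zero_zero [simp]: "Fk_zero k 0"
  by (simp add: Fk_zero_def Fk_ideal.zero)

lemma Fk_zero_add: "Fk_zero k F \<Longrightarrow> Fk_zero k G \<Longrightarrow> Fk_zero k (F + G)"
  by (simp add: Fk_zero_def lookup_add Fk_ideal.add)

lemma Fk_zero_diff: "Fk_zero k F \<Longrightarrow> Fk_zero k G \<Longrightarrow> Fk_zero k (F - G)"
  by (simp add: Fk_zero_def lookup_minus Fk_ideal_diff)

lemma Fk_zero_sum: "(\<And>i. i \<in> I \<Longrightarrow> Fk_zero k (f i)) \<Longrightarrow> Fk_zero k (\<Sum>i\<in>I. f i)"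
  by (induction I rule: infinite_finite_induct) (auto intro: Fk_zero_add)

lemma Fk_zero_mult_left: "Fk_zero k F \<Longrightarrow> Fk_zero k (G * F)"
  unfolding Fk_zero_def lookup_mult_as_sum
  by (auto intro!: Fk_ideal_sum Fk_ideal_when Fk_ideal.mult)

definition Fk_monos :: "nat \<Rightarrow> ((nat \<times> nat) \<Rightarrow>\<^sub>0 nat) set" where
  "Fk_monos k = {m. \<forall>p\<in>Poly_Mapping.keys m. 1 \<le> fst p \<and> fst p < snd p \<and> snd p \<le> k}"

lemma in_Fk_Fk_monos: "in_Fk k P \<longleftrightarrow> Poly_Mapping.keys P \<subseteq> Fk_monos k"
  by (auto simp: in_Fk_def Fk_monos_def)

lemma Fk_monos_add: "a \<in> Fk_monos k \<Longrightarrow> b \<in> Fk_monos k \<Longrightarrow> a + b \<in> Fk_monos k"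
  using keys_add[of a b] unfolding Fk_monos_def by blast

lemma in_Fk_zero [simp]: "in_Fk k 0"
  by (simp add: in_Fk_def)

lemma in_Fk_add: "in_Fk k P \<Longrightarrow> in_Fk k Q \<Longrightarrow> in_Fk k (P + Q)"
  unfolding in_Fk_Fk_monos using keys_add[of P Q] by blast

lemma in_Fk_uminus: "in_Fk k P \<Longrightarrow> in_Fk k (- P)"
  unfolding in_Fk_Fk_monos by simp

lemma in_Fk_diff: "in_Fk k P \<Longrightarrow> in_Fk k Q \<Longrightarrow> in_Fk k (P - Q)"
  unfolding in_Fk_Fk_monos using keys_diff[of P Q] by blast

lemma in_Fk_mult: "in_Fk k P \<Longrightarrow> in_Fk k Q \<Longrightarrow> in_Fk k (P * Q)"
  unfolding in_Fk_Fk_monos using keys_mult[of P Q] Fk_monos_add by blast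

lemma in_Fk_sum: "(\<And>i. i \<in> I \<Longrightarrow> in_Fk k (f i)) \<Longrightarrow> in_Fk k (\<Sum>i\<in>I. f i)"
  by (induction I rule: infinite_finite_induct) (auto intro: in_Fk_add)

lemma in_Fk_when: "in_Fk k P \<Longrightarrow> in_Fk k (P when b)"
  by (cases b) auto

lemma in_Fk_one [simp]: "in_Fk k 1"
  by (simp add: in_Fk_def)

lemma in_Fk_Delta: "i \<in> {1..k} \<Longrightarrow> j \<in> {1..k} \<Longrightarrow> i \<noteq> j \<Longrightarrow> in_Fk k (Delta i j)"
  by (auto simp: in_Fk_def Delta_def min_def max_def)

lemma act_dmon_Fk_monos:
  assumes "\<sigma> permutes {1..k}" "m \<in> Fk_monos k"
  shows "act_dmon \<sigma> m \<in> Fk_monos k"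
proof -
  have "Poly_Mapping.keys (act_dmon \<sigma> m) \<subseteq> act_pair \<sigma> ` Poly_Mapping.keys m"
    unfolding act_dmon_pm_push by (rule keys_pm_push)
  moreover have "\<forall>p\<in>act_pair \<sigma> ` Poly_Mapping.keys m. 1 \<le> fst p \<and> fst p < snd p \<and> snd p \<le> k"
  proof
    fix p assume "p \<in> act_pair \<sigma> ` Poly_Mapping.keys m"
    then obtain q where q: "q \<in> Poly_Mapping.keys m" "p = act_pair \<sigma> q" by auto
    then have q1: "fst q \<in> {1..k}" "snd q \<in> {1..k}" "fst q \<noteq> snd q"
      using assms(2) by (auto simp: Fk_monos_def)
    then have "\<sigma> (fst q) \<in> {1..k}" "\<sigma> (snd q) \<in> {1..k}" "\<sigma> (fst q) \<noteq> \<sigma> (snd q)"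
      using permutes_closed[OF assms(1)] q1(3) permutes_inj[OF assms(1)] by (auto simp: inj_eq)
    then show "1 \<le> fst p \<and> fst p < snd p \<and> snd p \<le> k"
      using q by (auto simp: act_pair_def min_def max_def)
  qed
  ultimately show ?thesis unfolding Fk_monos_def by blast
qed

lemma in_Fk_act_d: "\<sigma> permutes {1..k} \<Longrightarrow> in_Fk k P \<Longrightarrow> in_Fk k (act_d \<sigma> P)"
  unfolding in_Fk_Fk_monos act_d_pm_push using keys_pm_push[of "act_dmon \<sigma>" "\<lambda>x. x" P] act_dmon_Fk_monos by blast

definition Fk_laurent :: "nat \<Rightarrow> lpoly \<Rightarrow> bool" where
  "Fk_laurent k F \<longleftrightarrow> (\<forall>e\<in>Poly_Mapping.keys F. Poly_Mapping.keys e \<subseteq> {1..k} \<and> in_Fk k (Poly_Mapping.lookup F e))"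

lemma Fk_laurent_lookup: "Fk_laurent k F \<Longrightarrow> in_Fk k (Poly_Mapping.lookup F e)"
  unfolding Fk_laurent_def by (cases "e \<in> Poly_Mapping.keys F") (auto simp: in_keys_iff)

lemma Fk_laurent_keys: "Fk_laurent k F \<Longrightarrow> e \<in> Poly_Mapping.keys F \<Longrightarrow> Poly_Mapping.keys e \<subseteq> {1..k}"
  unfolding Fk_laurent_def by auto

lemma Fk_laurentI:
  "(\<And>e. e \<in> Poly_Mapping.keys F \<Longrightarrow> Poly_Mapping.keys e \<subseteq> {1..k}) \<Longrightarrow>
    (\<And>e. in_Fk k (Poly_Mapping.lookup F e)) \<Longrightarrow> Fk_laurent k F"
  unfolding Fk_laurent_def by auto

lemma Fk_laurent_zero [simp]: "Fk_laurent k 0"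
  by (simp add: Fk_laurent_def)

lemma Fk_laurent_add: assumes "Fk_laurent k F" "Fk_laurent k G" shows "Fk_laurent k (F + G)"
  by (rule Fk_laurentI) (use keys_add[of F G] Fk_laurent_keys[OF assms(1)] Fk_laurent_keys[OF assms(2)] in blast,
     use assms in \<open>auto simp: lookup_add Fk_laurent_lookup intro!: in_Fk_add\<close>)

lemma Fk_laurent_uminus: assumes "Fk_laurent k F" shows "Fk_laurent k (- F)"
  by (rule Fk_laurentI) (use Fk_laurent_keys[OF assms(1)] in simp, use assms in \<open>auto simp: Fk_laurent_lookup intro!: in_Fk_uminus\<close>)

lemma Fk_laurent_diff: assumes "Fk_laurent k F" "Fk_laurent k G" shows "Fk_laurent k (F - G)"
  by (rule Fk_laurentI) (use keys_diff[of F G] Fk_laurent_keys[OF assms(1)] Fk_laurent_keys[OF assms(2)] in blast,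
     use assms in \<open>auto simp: lookup_minus Fk_laurent_lookup intro!: in_Fk_diff\<close>)

lemma Fk_laurent_mult: "Fk_laurent k F \<Longrightarrow> Fk_laurent k G \<Longrightarrow> Fk_laurent k (F * G)"
proof (rule Fk_laurentI)
  fix e assume F: "Fk_laurent k F" and G: "Fk_laurent k G" and e: "e \<in> Poly_Mapping.keys (F * G)"
  then obtain a b where "a \<in> Poly_Mapping.keys F" "b \<in> Poly_Mapping.keys G" "e = a + b"
    using keys_mult[of F G] by blast
  then show "Poly_Mapping.keys e \<subseteq> {1..k}"
    using keys_add[of a b] Fk_laurent_keys[OF F] Fk_laurent_keys[OF G] by blast
next
  fix e assume F: "Fk_laurent k F" and G: "Fk_laurent k G"
  show "in_Fk k (Poly_Mapping.lookup (F * G) e)"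
    unfolding lookup_mult_as_sum
    by (intro in_Fk_sum in_Fk_when in_Fk_mult Fk_laurent_lookup F G)
qed

lemma Fk_laurent_sum: "(\<And>i. i \<in> I \<Longrightarrow> Fk_laurent k (f i)) \<Longrightarrow> Fk_laurent k (\<Sum>i\<in>I. f i)"
  by (induction I rule: infinite_finite_induct) (auto intro: Fk_laurent_add)

lemma Fk_laurent_one [simp]: "Fk_laurent k 1"
  by (rule Fk_laurentI) (auto simp: lookup_one when_def)

lemma Fk_laurent_prod: "(\<And>i. i \<in> I \<Longrightarrow> Fk_laurent k (f i)) \<Longrightarrow> Fk_laurent k (\<Prod>i\<in>I. f i)"
  by (induction I rule: infinite_finite_induct) (auto intro: Fk_laurent_mult)

lemma Fk_laurent_power: "Fk_laurent k F \<Longrightarrow> Fk_laurent k (F ^ m)"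
  by (induction m) (auto intro: Fk_laurent_mult)

lemma Fk_laurent_single: "Poly_Mapping.keys e \<subseteq> {1..k} \<Longrightarrow> in_Fk k c \<Longrightarrow> Fk_laurent k (Poly_Mapping.single e c)"
  by (rule Fk_laurentI) (auto simp: lookup_single when_def split: if_splits)

lemma Fk_laurent_zvar: "i \<in> {1..k} \<Longrightarrow> Fk_laurent k (zvar i)"
  unfolding zvar_def by (rule Fk_laurent_single) auto

lemma Fk_laurent_const: "in_Fk k c \<Longrightarrow> Fk_laurent k (const c)"
  unfolding const_def by (rule Fk_laurent_single) auto

lemma Fk_laurent_act:
  assumes \<sigma>: "\<sigma> permutes {1..k}" and F: "Fk_laurent k F"
  shows "Fk_laurent k (act \<sigma> F)"
proof (rule Fk_laurentI)
  fix e assume "e \<in> Poly_Mapping.keys (act \<sigma> F)"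
  then obtain f where f: "f \<in> Poly_Mapping.keys F" "e = act_zexp \<sigma> f"
    using keys_pm_push[of "act_zexp \<sigma>" "act_d \<sigma>" F] unfolding act_pm_push by blast
  have "Poly_Mapping.keys e \<subseteq> \<sigma> ` Poly_Mapping.keys f"
    using f keys_pm_push[of \<sigma> "\<lambda>x. x" f] unfolding act_zexp_pm_push by blast
  also have "\<dots> \<subseteq> {1..k}"
    using Fk_laurent_keys[OF F f(1)] permutes_closed[OF \<sigma>] by blast
  finally show "Poly_Mapping.keys e \<subseteq> {1..k}" .
next
  fix e show "in_Fk k (Poly_Mapping.lookup (act \<sigma> F) e)"
    unfolding act_pm_push lookup_pm_push
    by (intro in_Fk_sum in_Fk_act_d[OF \<sigma>] Fk_laurent_lookup[OF F])
qed

section \<open>Diagonal substitutions\<close>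

definition zexp_subst :: "nat \<Rightarrow> nat \<Rightarrow> (nat \<Rightarrow>\<^sub>0 int) \<Rightarrow> (nat \<Rightarrow>\<^sub>0 int)" where
  "zexp_subst a b e = e + Poly_Mapping.single b (Poly_Mapping.lookup e a) - Poly_Mapping.single a (Poly_Mapping.lookup e a)"

lemma zexp_subst_add: "zexp_subst a b (e + f) = zexp_subst a b e + zexp_subst a b f"
  by (simp add: zexp_subst_def lookup_add single_add algebra_simps)

lemma zexp_subst_zero [simp]: "zexp_subst a b 0 = 0"
  by (simp add: zexp_subst_def)

lemma lookup_zexp_subst: "Poly_Mapping.lookup (zexp_subst a b e) x =
   (if x = a \<and> a \<noteq> b then 0 else if x = b \<and> a \<noteq> b then Poly_Mapping.lookup e b + Poly_Mapping.lookup e a else Poly_Mapping.lookup e x)"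
  unfolding zexp_subst_def lookup_add lookup_minus lookup_single by (cases "x = a"; cases "x = b") (simp_all add: when_def)

definition subst_var :: "nat \<Rightarrow> nat \<Rightarrow> lpoly \<Rightarrow> lpoly" where
  "subst_var a b F = pm_push (zexp_subst a b) (\<lambda>x. x) F"

lemma subst_var_add: "subst_var a b (F + G) = subst_var a b F + subst_var a b G"
  unfolding subst_var_def by (rule pm_push_add) auto

lemma subst_var_diff: "subst_var a b (F - G) = subst_var a b F - subst_var a b G"
  unfolding subst_var_def by (rule pm_push_diff) auto

lemma subst_var_uminus: "subst_var a b (- F) = - subst_var a b F"
  unfolding subst_var_def by (rule pm_push_uminus) auto

lemma subst_var_mult: "subst_var a b (F * G) = subst_var a b F * subst_var a b G"
  unfolding subst_var_def by (rule pm_push_mult) (auto simp: zexp_subst_add)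

lemma subst_var_one [simp]: "subst_var a b 1 = 1"
  unfolding subst_var_def by (rule pm_push_one) auto

lemma subst_var_zero [simp]: "subst_var a b 0 = 0"
  unfolding subst_var_def by simp

lemma subst_var_prod: "subst_var a b (\<Prod>i\<in>I. f i) = (\<Prod>i\<in>I. subst_var a b (f i))"
  by (induction I rule: infinite_finite_induct) (auto simp: subst_var_mult)

lemma subst_var_sum: "subst_var a b (\<Sum>i\<in>I. f i) = (\<Sum>i\<in>I. subst_var a b (f i))"
  unfolding subst_var_def by (rule pm_push_sum) auto

lemma subst_var_single: "subst_var a b (Poly_Mapping.single e c) = Poly_Mapping.single (zexp_subst a b e) c"
  unfolding subst_var_def by (rule pm_push_single) auto

lemma subst_var_zvar [simp]: "subst_var a b (zvar i) = zvar (if i = a then b else i)"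
  by (auto simp: zvar_def subst_var_single zexp_subst_def)

lemma subst_var_const [simp]: "subst_var a b (const c) = const c"
  by (simp add: const_def subst_var_single)

lemma Fk_zero_subst_var: "Fk_zero k F \<Longrightarrow> Fk_zero k (subst_var a b F)"
  unfolding Fk_zero_def subst_var_def lookup_pm_push by (auto intro: Fk_ideal_sum)

lemma Fk_laurent_subst_var:
  assumes "a \<in> {1..k}" "b \<in> {1..k}" "Fk_laurent k F"
  shows "Fk_laurent k (subst_var a b F)"
proof (rule Fk_laurentI)
  fix e assume "e \<in> Poly_Mapping.keys (subst_var a b F)"
  then obtain f where f: "f \<in> Poly_Mapping.keys F" "e = zexp_subst a b f"
    using keys_pm_push[of "zexp_subst a b" "\<lambda>x. x" F] unfolding subst_var_def by blast
  have "Poly_Mapping.keys e \<subseteq> Poly_Mapping.keys f \<union> {b}"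
  proof
    fix x assume "x \<in> Poly_Mapping.keys e"
    then show "x \<in> Poly_Mapping.keys f \<union> {b}"
      using f(2) by (auto simp: in_keys_iff lookup_zexp_subst split: if_splits)
  qed
  then show "Poly_Mapping.keys e \<subseteq> {1..k}"
    using Fk_laurent_keys[OF assms(3) f(1)] assms(2) by blast
next
  fix e show "in_Fk k (Poly_Mapping.lookup (subst_var a b F) e)"
    unfolding subst_var_def lookup_pm_push by (intro in_Fk_sum Fk_laurent_lookup[OF assms(3)])
qed

definition act_coeffs :: "(nat \<Rightarrow> nat) \<Rightarrow> lpoly \<Rightarrow> lpoly" where
  "act_coeffs \<tau> F = pm_push (\<lambda>x. x) (act_d \<tau>) F"

lemma lookup_act_coeffs: "Poly_Mapping.lookup (act_coeffs \<tau> F) e = act_d \<tau> (Poly_Mapping.lookup F e)"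
proof -
  have "{f \<in> Poly_Mapping.keys F. f = e} = (if e \<in> Poly_Mapping.keys F then {e} else {})" by auto
  then show ?thesis unfolding act_coeffs_def lookup_pm_push by (auto simp: in_keys_iff)
qed

lemma act_coeffs_mult: "act_coeffs \<tau> (F * G) = act_coeffs \<tau> F * act_coeffs \<tau> G"
  unfolding act_coeffs_def by (rule pm_push_mult) (auto simp: act_d_add act_d_mult)

lemma act_coeffs_const [simp]: "act_coeffs \<tau> (const c) = const (act_d \<tau> c)"
  by (simp add: act_coeffs_def const_def pm_push_single)

lemma lookup_act_zexp:
  assumes "bij \<sigma>"
  shows "Poly_Mapping.lookup (act_zexp \<sigma> e) x = Poly_Mapping.lookup e (inv \<sigma> x)"
proof -
  have "{f \<in> Poly_Mapping.keys e. \<sigma> f = x} = (if inv \<sigma> x \<in> Poly_Mapping.keys e then {inv \<sigma> x} else {})"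
    using assms bij_is_inj[OF assms] bij_is_surj[OF assms] by (auto simp: surj_f_inv_f inv_f_f)
  then show ?thesis unfolding act_zexp_pm_push lookup_pm_push by (auto simp: in_keys_iff)
qed

lemma zexp_subst_act_transpose: "zexp_subst a b (act_zexp (Transposition.transpose a b) e) = zexp_subst a b e"
proof (rule poly_mapping_eqI)
  fix x
  have bij: "bij (Transposition.transpose a b)" by simp
  have inv: "inv (Transposition.transpose a b) = Transposition.transpose a b"
    by (simp add: inv_unique_comp)
  show "Poly_Mapping.lookup (zexp_subst a b (act_zexp (Transposition.transpose a b) e)) x = Poly_Mapping.lookup (zexp_subst a b e) x"
    unfolding lookup_zexp_subst lookup_act_zexp[OF bij] inv
    by (cases "x = a"; cases "x = b") simp_all
qed

lemma subst_var_act_transpose: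
  "subst_var a b (act (Transposition.transpose a b) F) = act_coeffs (Transposition.transpose a b) (subst_var a b F)"
proof -
  have "subst_var a b (act (Transposition.transpose a b) F) =
     pm_push (zexp_subst a b \<circ> act_zexp (Transposition.transpose a b)) ((\<lambda>x. x) \<circ> act_d (Transposition.transpose a b)) F"
    unfolding subst_var_def act_pm_push by (rule pm_push_comp) auto
  also have "\<dots> = pm_push ((\<lambda>x. x) \<circ> zexp_subst a b) (act_d (Transposition.transpose a b) \<circ> (\<lambda>x. x)) F"
    by (rule pm_push_cong) (auto simp: zexp_subst_act_transpose)
  also have "\<dots> = act_coeffs (Transposition.transpose a b) (subst_var a b F)"
    unfolding subst_var_def act_coeffs_def by (rule pm_push_comp[symmetric]) (auto simp: act_d_add)
  finally show ?thesis .
qed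

section \<open>Divisibility by the Vandermonde product\<close>

lemma lookup_zvar_mult: "Poly_Mapping.lookup (zvar x * G) e = Poly_Mapping.lookup G (e - Poly_Mapping.single x 1)"
  unfolding zvar_def by (simp add: lookup_single_mult)

lemma lookup_zvar_diff_mult:
  "Poly_Mapping.lookup ((zvar x - zvar y) * G) (g + Poly_Mapping.single x 1) =
     Poly_Mapping.lookup G g - Poly_Mapping.lookup G (g + (Poly_Mapping.single x 1 - Poly_Mapping.single y 1))"
  by (simp only: left_diff_distrib lookup_minus lookup_zvar_mult) (simp add: add_diff_eq)

text \<open>Modulo the relations, all coefficients of \<open>G\<close> along a ray in direction
  \<open>z\<^sub>x / z\<^sub>y\<close> agree, and far out on the ray they vanish.\<close>
lemma Fk_zero_cancel_zvar_diff:
  assumes "x \<noteq> y" "Fk_zero k ((zvar x - zvar y) * G)"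
  shows "Fk_zero k G"
  unfolding Fk_zero_def
proof
  fix f
  let ?w = "\<lambda>m::nat. Poly_Mapping.single x (int m) - Poly_Mapping.single y (int m)"
  have step: "Poly_Mapping.lookup G g - Poly_Mapping.lookup G (g + ?w 1) \<in> Fk_ideal k" for g
  proof -
    have "Poly_Mapping.lookup ((zvar x - zvar y) * G) (g + Poly_Mapping.single x 1) \<in> Fk_ideal k"
      using assms(2) by (simp add: Fk_zero_def)
    then show ?thesis by (simp add: lookup_zvar_diff_mult)
  qed
  have ray: "Poly_Mapping.lookup G f - Poly_Mapping.lookup G (f + ?w m) \<in> Fk_ideal k" for m
  proof (induction m)
    case (Suc m)
    have eq: "f + ?w m + ?w 1 = f + ?w (Suc m)"
      by (simp add: single_add algebra_simps)
    have "Poly_Mapping.lookup G f - Poly_Mapping.lookup G (f + ?w (Suc m)) =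
        (Poly_Mapping.lookup G f - Poly_Mapping.lookup G (f + ?w m)) +
        (Poly_Mapping.lookup G (f + ?w m) - Poly_Mapping.lookup G (f + ?w m + ?w 1))"
      by (simp only: eq) simp
    then show ?case
      using Fk_ideal.add[OF Suc step[of "f + ?w m"]] by simp
  qed (simp add: Fk_ideal.zero)
  have "inj (\<lambda>m. f + ?w m)"
  proof (rule injI)
    fix m1 m2 assume "f + ?w m1 = f + ?w m2"
    then have "Poly_Mapping.lookup (f + ?w m1) x = Poly_Mapping.lookup (f + ?w m2) x" by simp
    then show "m1 = m2" using assms(1) by (simp add: lookup_add lookup_minus lookup_single)
  qed
  then have "\<not> range (\<lambda>m. f + ?w m) \<subseteq> Poly_Mapping.keys G"
    using finite_keys[of G] by (metis finite_imageD finite_subset infinite_UNIV_nat)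
  then obtain m where "Poly_Mapping.lookup G (f + ?w m) = 0" by (auto simp: in_keys_iff)
  then show "Poly_Mapping.lookup G f \<in> Fk_ideal k" using ray[of m] by simp
qed

lemma Fk_zero_cancel_prod_zvar_diff:
  assumes "finite P" "\<And>p. p \<in> P \<Longrightarrow> g p \<noteq> h p"
    and "Fk_zero k ((\<Prod>p\<in>P. zvar (g p) - zvar (h p)) * G)"
  shows "Fk_zero k G"
  using assms
proof (induction P arbitrary: G rule: finite_induct)
  case (insert p P)
  then have "Fk_zero k ((zvar (g p) - zvar (h p)) * ((\<Prod>p\<in>P. zvar (g p) - zvar (h p)) * G))"
    by (simp add: mult.assoc)
  then show ?case using Fk_zero_cancel_zvar_diff insert by blast
qed simp

definition zmon :: "(nat \<Rightarrow>\<^sub>0 int) \<Rightarrow> lpoly" where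
  "zmon e = Poly_Mapping.single e 1"

lemma zmon_add: "zmon (a + b) = zmon a * zmon b"
  by (simp add: zmon_def mult_single)

lemma zmon_zero [simp]: "zmon 0 = 1"
  by (simp add: zmon_def)

lemma zvar_zmon: "zvar x = zmon (Poly_Mapping.single x 1)"
  by (simp add: zvar_def zmon_def)

lemma single_const_zmon: "Poly_Mapping.single e c = const c * zmon e"
  by (simp add: const_def zmon_def mult_single)

lemma Fk_laurent_zmon: "Poly_Mapping.keys e \<subseteq> {1..k} \<Longrightarrow> Fk_laurent k (zmon e)"
  unfolding zmon_def by (rule Fk_laurent_single) auto

lemma Fk_laurent_zmon_single: "x \<in> {1..k} \<Longrightarrow> Fk_laurent k (zmon (Poly_Mapping.single x m))"
  by (rule Fk_laurent_zmon) auto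

lemma zmon_single_diff_factor_nat:
  assumes "x \<in> {1..k}" "y \<in> {1..k}"
  shows "\<exists>H. Fk_laurent k H \<and>
    zmon (Poly_Mapping.single x (int n)) - zmon (Poly_Mapping.single y (int n)) = (zvar x - zvar y) * H"
proof (induction n)
  case (Suc n)
  let ?X = "zmon (Poly_Mapping.single x (int n))" and ?Y = "zmon (Poly_Mapping.single y (int n))"
  obtain H where H: "Fk_laurent k H" "?X - ?Y = (zvar x - zvar y) * H"
    using Suc by blast
  have "zmon (Poly_Mapping.single x (int (Suc n))) = ?X * zvar x" "zmon (Poly_Mapping.single y (int (Suc n))) = ?Y * zvar y"
    by (simp_all add: zvar_zmon zmon_add[symmetric] single_add[symmetric] add.commute)
  then have "zmon (Poly_Mapping.single x (int (Suc n))) - zmon (Poly_Mapping.single y (int (Suc n))) =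
      (?X - ?Y) * zvar x + ?Y * (zvar x - zvar y)"
    by (simp add: algebra_simps)
  also have "\<dots> = (zvar x - zvar y) * (H * zvar x + ?Y)"
    unfolding H(2) by (simp add: algebra_simps)
  finally show ?case
    using H(1) assms by (intro exI[of _ "H * zvar x + ?Y"])
      (auto intro!: Fk_laurent_add Fk_laurent_mult Fk_laurent_zvar Fk_laurent_zmon_single)
qed (intro exI[of _ 0], simp)

lemma diff_of_inverses:
  fixes u u' v v' :: "'a::comm_ring_1"
  assumes "u' * u = 1" "v' * v = 1"
  shows "u' - v' = - (u' * v') * (u - v)"
proof -
  have "u' - v' = u' * (v' * v) - v' * (u' * u)" using assms by simp
  then show ?thesis by (simp add: algebra_simps)
qed

lemma zmon_single_diff_factor:
  assumes "x \<in> {1..k}" "y \<in> {1..k}"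
  shows "\<exists>H. Fk_laurent k H \<and>
    zmon (Poly_Mapping.single x m) - zmon (Poly_Mapping.single y m) = (zvar x - zvar y) * H"
proof (cases "m \<ge> 0")
  case True
  then obtain n where "m = int n" by (metis nonneg_eq_int)
  then show ?thesis using zmon_single_diff_factor_nat[OF assms] by blast
next
  case False
  then obtain n where n: "m = - int n" by (intro that[of "nat (- m)"]) simp
  obtain H where H: "Fk_laurent k H"
    "zmon (Poly_Mapping.single x (int n)) - zmon (Poly_Mapping.single y (int n)) = (zvar x - zvar y) * H"
    using zmon_single_diff_factor_nat[OF assms] by blast
  let ?X = "zmon (Poly_Mapping.single x m)" and ?Y = "zmon (Poly_Mapping.single y m)"
  have "?X - ?Y = - (?X * ?Y) * (zmon (Poly_Mapping.single x (int n)) - zmon (Poly_Mapping.single y (int n)))"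
    by (rule diff_of_inverses) (simp_all add: n zmon_add[symmetric] single_add[symmetric])
  also have "\<dots> = (zvar x - zvar y) * (- (?X * ?Y) * H)"
    unfolding H(2) by (simp add: algebra_simps)
  finally show ?thesis
    using H(1) assms by (intro exI[of _ "- (?X * ?Y) * H"])
      (auto intro!: Fk_laurent_uminus Fk_laurent_mult Fk_laurent_zmon_single)
qed

lemma zmon_diff_subst_factor:
  assumes "x \<in> {1..k}" "y \<in> {1..k}" "Poly_Mapping.keys e \<subseteq> {1..k}"
  shows "\<exists>H. Fk_laurent k H \<and> zmon e - zmon (zexp_subst x y e) = (zvar x - zvar y) * H"
proof -
  define m where "m = Poly_Mapping.lookup e x"
  define r where "r = e - Poly_Mapping.single x m"
  have e: "e = r + Poly_Mapping.single x m" by (simp add: r_def)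
  have se: "zexp_subst x y e = r + Poly_Mapping.single y m"
    by (simp add: zexp_subst_def r_def m_def algebra_simps)
  have "Poly_Mapping.keys r \<subseteq> Poly_Mapping.keys e"
    by (auto simp: r_def m_def in_keys_iff lookup_minus lookup_single when_def split: if_splits)
  then have r: "Fk_laurent k (zmon r)" using assms(3) by (intro Fk_laurent_zmon) blast
  obtain H where H: "Fk_laurent k H"
    "zmon (Poly_Mapping.single x m) - zmon (Poly_Mapping.single y m) = (zvar x - zvar y) * H"
    using zmon_single_diff_factor[OF assms(1,2)] by blast
  have "zmon e - zmon (zexp_subst x y e) = zmon r * (zmon (Poly_Mapping.single x m) - zmon (Poly_Mapping.single y m))"
    by (subst (1) e, subst se) (simp add: zmon_add algebra_simps)
  also have "\<dots> = (zvar x - zvar y) * (zmon r * H)"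
    unfolding H(2) by (simp add: algebra_simps)
  finally show ?thesis using r H(1) by (intro exI[of _ "zmon r * H"]) (auto intro: Fk_laurent_mult)
qed

lemma diff_subst_var_factor:
  assumes "x \<in> {1..k}" "y \<in> {1..k}" "Fk_laurent k F"
  shows "\<exists>Q. Fk_laurent k Q \<and> F - subst_var x y F = (zvar x - zvar y) * Q"
proof -
  obtain H where H: "\<And>e. e \<in> Poly_Mapping.keys F \<Longrightarrow>
      Fk_laurent k (H e) \<and> zmon e - zmon (zexp_subst x y e) = (zvar x - zvar y) * H e"
    using zmon_diff_subst_factor[OF assms(1,2) Fk_laurent_keys[OF assms(3)]] by metis
  have F: "F = (\<Sum>e\<in>Poly_Mapping.keys F. const (Poly_Mapping.lookup F e) * zmon e)"
    by (subst poly_mapping_sum_singles) (simp add: single_const_zmon)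
  have sF: "subst_var x y F = (\<Sum>e\<in>Poly_Mapping.keys F. const (Poly_Mapping.lookup F e) * zmon (zexp_subst x y e))"
    by (subst (1) F) (simp add: subst_var_sum subst_var_mult zmon_def subst_var_single)
  have "F - subst_var x y F =
      (\<Sum>e\<in>Poly_Mapping.keys F. const (Poly_Mapping.lookup F e) * (zmon e - zmon (zexp_subst x y e)))"
    by (subst (1) F, subst sF) (simp add: sum_subtractf algebra_simps)
  also have "\<dots> = (zvar x - zvar y) * (\<Sum>e\<in>Poly_Mapping.keys F. const (Poly_Mapping.lookup F e) * H e)"
    by (simp add: H sum_distrib_left algebra_simps)
  finally show ?thesis
    using H assms(3) by (intro exI[of _ "\<Sum>e\<in>Poly_Mapping.keys F. const (Poly_Mapping.lookup F e) * H e"])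
      (auto intro!: Fk_laurent_sum Fk_laurent_mult Fk_laurent_const Fk_laurent_lookup)
qed

definition vandermonde_on :: "(nat \<times> nat) set \<Rightarrow> lpoly" where
  "vandermonde_on P = (\<Prod>p\<in>P. zvar (snd p) - zvar (fst p))"

definition vandermonde :: "nat \<Rightarrow> lpoly" where
  "vandermonde k = vandermonde_on (pairs k)"

lemma finite_pairs: "finite (pairs k)"
  by (rule finite_subset[of _ "{1..k} \<times> {1..k}"]) (auto simp: pairs_def)

lemma Fk_zero_cancel_subst_var_vandermonde_on:
  assumes "P \<subseteq> pairs k" "(a, b) \<in> pairs k - P"
    and "Fk_zero k (subst_var a b (vandermonde_on P) * G)"
  shows "Fk_zero k G"
proof -
  define s where "s i = (if i = a then b else i)" for i
  have "subst_var a b (vandermonde_on P) = (\<Prod>q\<in>P. zvar (s (snd q)) - zvar (s (fst q)))"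
    by (simp add: vandermonde_on_def subst_var_prod subst_var_diff s_def)
  moreover have "s (snd q) \<noteq> s (fst q)" if "q \<in> P" for q
    using that assms(1,2) by (cases q) (auto simp: s_def pairs_def)
  ultimately show ?thesis
    using assms(3) Fk_zero_cancel_prod_zvar_diff[OF finite_subset[OF assms(1) finite_pairs],
        of "\<lambda>q. s (snd q)" "\<lambda>q. s (fst q)" k G] by simp
qed

lemma vandermonde_on_quotient:
  assumes F: "Fk_laurent k F" and diag: "\<And>a b. (a, b) \<in> pairs k \<Longrightarrow> Fk_zero k (subst_var a b F)"
    and P: "P \<subseteq> pairs k"
  shows "\<exists>Q. Fk_laurent k Q \<and> Fk_zero k (F - vandermonde_on P * Q)"
proof -
  have "finite P" using P finite_pairs by (rule finite_subset)
  then show ?thesis using P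
  proof (induction P rule: finite_induct)
    case empty
    show ?case using F by (intro exI[of _ F]) (simp add: vandermonde_on_def)
  next
    case (insert p P)
    obtain a b where p: "p = (a, b)" by (cases p)
    have ab: "(a, b) \<in> pairs k - P" "a \<in> {1..k}" "b \<in> {1..k}"
      using insert p by (auto simp: pairs_def)
    obtain Q where Q: "Fk_laurent k Q" "Fk_zero k (F - vandermonde_on P * Q)"
      using insert by auto
    have "Fk_zero k (subst_var a b F - subst_var a b (F - vandermonde_on P * Q))"
      using diag ab(1) Fk_zero_subst_var[OF Q(2)] by (blast intro: Fk_zero_diff)
    then have "Fk_zero k (subst_var a b (vandermonde_on P) * subst_var a b Q)"
      by (simp add: subst_var_diff subst_var_mult)
    then have subst_Q: "Fk_zero k (subst_var a b Q)"
      using Fk_zero_cancel_subst_var_vandermonde_on insert.prems ab(1) by blast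
    obtain Q' where Q': "Fk_laurent k Q'" "Q - subst_var a b Q = (zvar a - zvar b) * Q'"
      using diff_subst_var_factor[OF ab(2,3) Q(1)] by blast
    have "vandermonde_on (insert p P) = (zvar b - zvar a) * vandermonde_on P"
      using insert p by (simp add: vandermonde_on_def)
    then have "vandermonde_on (insert p P) * (- Q') = vandermonde_on P * ((zvar a - zvar b) * Q')"
      by (simp only:) (simp add: algebra_simps)
    also have "\<dots> = vandermonde_on P * Q - vandermonde_on P * subst_var a b Q"
      unfolding Q'(2)[symmetric] by (simp add: algebra_simps)
    finally have "F - vandermonde_on (insert p P) * (- Q') =
        (F - vandermonde_on P * Q) + vandermonde_on P * subst_var a b Q"
      by simp
    moreover have "Fk_zero k ((F - vandermonde_on P * Q) + vandermonde_on P * subst_var a b Q)"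
      by (intro Fk_zero_add Q(2) Fk_zero_mult_left subst_Q)
    ultimately show ?case using Q'(1) Fk_laurent_uminus by metis
  qed
qed

section \<open>The alternant\<close>

definition inversions :: "nat \<Rightarrow> (nat \<Rightarrow> nat) \<Rightarrow> (nat \<times> nat) set" where
  "inversions k \<sigma> = {p \<in> pairs k. \<sigma> (snd p) < \<sigma> (fst p)}"

definition inversion_sign :: "nat \<Rightarrow> (nat \<Rightarrow> nat) \<Rightarrow> 'a::ring_1" where
  "inversion_sign k \<sigma> = (- 1) ^ card (inversions k \<sigma>)"

lemma inversion_sign_square: "inversion_sign k \<sigma> * inversion_sign k \<sigma> = 1"
  by (simp add: inversion_sign_def flip: power_add)

lemma act_inversion_sign [simp]: "act \<tau> (inversion_sign k \<sigma>) = inversion_sign k \<sigma>"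
  by (simp add: inversion_sign_def act_power act_uminus)

lemma subst_var_power: "subst_var a b (x ^ m) = subst_var a b x ^ m"
  by (induction m) (auto simp: subst_var_mult)

lemma subst_var_inversion_sign [simp]: "subst_var a b (inversion_sign k \<sigma>) = inversion_sign k \<sigma>"
  by (simp add: inversion_sign_def subst_var_power subst_var_uminus)

lemma const_mult: "const (a * b) = const a * const b"
  by (simp add: const_def mult_single)

lemma const_inversion_sign: "const (inversion_sign k \<sigma>) = inversion_sign k \<sigma>"
proof -
  have "const ((- 1) ^ m) = (- 1) ^ m" for m
    by (induction m) (simp_all add: const_mult, simp_all add: const_def single_uminus)
  then show ?thesis by (simp add: inversion_sign_def)
qed

lemma act_pair_pairs:
  assumes "\<sigma> permutes {1..k}" "p \<in> pairs k"
  shows "act_pair \<sigma> p \<in> pairs k"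
proof -
  have "fst p \<in> {1..k}" "snd p \<in> {1..k}" "fst p \<noteq> snd p" using assms(2) by (auto simp: pairs_def)
  then have "\<sigma> (fst p) \<in> {1..k}" "\<sigma> (snd p) \<in> {1..k}" "\<sigma> (fst p) \<noteq> \<sigma> (snd p)"
    using permutes_closed[OF assms(1)] permutes_inj[OF assms(1)] by (auto simp: inj_eq)
  then show ?thesis by (auto simp: act_pair_def pairs_def min_def max_def)
qed

lemma act_pair_inj:
  assumes "\<sigma> permutes {1..k}"
  shows "inj_on (act_pair \<sigma>) (pairs k)"
proof
  fix p q assume p: "p \<in> pairs k" and q: "q \<in> pairs k" and eq: "act_pair \<sigma> p = act_pair \<sigma> q"
  have image: "{fst (act_pair \<sigma> r), snd (act_pair \<sigma> r)} = \<sigma> ` {fst r, snd r}" for r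
    by (auto simp: act_pair_def min_def max_def)
  from eq have "\<sigma> ` {fst p, snd p} = \<sigma> ` {fst q, snd q}"
    using image[of p] image[of q] by simp
  then have "{fst p, snd p} = {fst q, snd q}"
    by (rule iffD1[OF inj_image_eq_iff[OF permutes_inj[OF assms]]])
  then show "p = q" using p q by (cases p; cases q) (auto simp: pairs_def doubleton_eq_iff)
qed

lemma act_pair_bij:
  assumes "\<sigma> permutes {1..k}"
  shows "bij_betw (act_pair \<sigma>) (pairs k) (pairs k)"
proof -
  have "act_pair \<sigma> ` pairs k \<subseteq> pairs k" using act_pair_pairs[OF assms] by blast
  moreover have "card (act_pair \<sigma> ` pairs k) = card (pairs k)"
    using card_image[OF act_pair_inj[OF assms]] .
  ultimately have "act_pair \<sigma> ` pairs k = pairs k" using finite_pairs by (metis card_subset_eq)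
  then show ?thesis using act_pair_inj[OF assms] by (simp add: bij_betw_def)
qed

lemma prod_if_minus_one:
  assumes "finite A"
  shows "(\<Prod>p\<in>A. if P p then - 1 else (1::'a::comm_ring_1)) = (- 1) ^ card {p \<in> A. P p}"
proof -
  have "(\<Prod>p\<in>A. if P p then - 1 else (1::'a)) = (\<Prod>p\<in>{p \<in> A. P p}. - 1)"
    by (rule prod.mono_neutral_cong_right) (use assms in auto)
  then show ?thesis by simp
qed

lemma act_vandermonde:
  assumes \<sigma>: "\<sigma> permutes {1..k}"
  shows "act \<sigma> (vandermonde k) = inversion_sign k \<sigma> * vandermonde k"
proof -
  let ?f = "\<lambda>q. zvar (snd q) - zvar (fst q)"
  have "act \<sigma> (vandermonde k) = (\<Prod>p\<in>pairs k. zvar (\<sigma> (snd p)) - zvar (\<sigma> (fst p)))"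
    by (simp add: vandermonde_def vandermonde_on_def act_prod act_diff)
  also have "\<dots> = (\<Prod>p\<in>pairs k. (if \<sigma> (snd p) < \<sigma> (fst p) then - 1 else 1) * ?f (act_pair \<sigma> p))"
    by (rule prod.cong) (auto simp: act_pair_def min_def max_def)
  also have "\<dots> = (\<Prod>p\<in>pairs k. if \<sigma> (snd p) < \<sigma> (fst p) then - 1 else 1) * (\<Prod>p\<in>pairs k. ?f (act_pair \<sigma> p))"
    by (rule prod.distrib)
  also have "(\<Prod>p\<in>pairs k. ?f (act_pair \<sigma> p)) = vandermonde k"
    unfolding vandermonde_def vandermonde_on_def by (rule prod.reindex_bij_betw[OF act_pair_bij[OF \<sigma>]])
  also have "(\<Prod>p\<in>pairs k. if \<sigma> (snd p) < \<sigma> (fst p) then - 1 else (1::lpoly)) = inversion_sign k \<sigma>"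
    by (simp add: prod_if_minus_one finite_pairs inversion_sign_def inversions_def)
  finally show ?thesis .
qed

lemma inversions_transpose:
  assumes "1 \<le> a" "a < b" "b \<le> k"
  shows "inversions k (Transposition.transpose a b) =
    insert (a, b) ((\<lambda>c. (a, c)) ` {a<..<b} \<union> (\<lambda>c. (c, b)) ` {a<..<b})"
  unfolding inversions_def using assms by (auto simp: pairs_def transpose_def split: if_splits)

lemma card_inversions_transpose:
  assumes "1 \<le> a" "a < b" "b \<le> k"
  shows "card (inversions k (Transposition.transpose a b)) = Suc (2 * (b - a - 1))"
proof -
  let ?A = "(\<lambda>c. (a, c)) ` {a<..<b}" and ?B = "(\<lambda>c. (c, b)) ` {a<..<b}"
  have "card ?A = b - a - 1" "card ?B = b - a - 1"
    by (subst card_image; auto simp: inj_on_def)+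
  moreover have "?A \<inter> ?B = {}" "(a, b) \<notin> ?A \<union> ?B" by auto
  ultimately show ?thesis
    unfolding inversions_transpose[OF assms] by (simp add: card_insert_if card_Un_disjoint)
qed

lemma inversion_sign_transpose:
  assumes "1 \<le> a" "a < b" "b \<le> k"
  shows "inversion_sign k (Transposition.transpose a b) = (- 1 :: 'a::ring_1)"
  unfolding inversion_sign_def card_inversions_transpose[OF assms] by simp

lemma zvar_inj: "zvar i = zvar j \<Longrightarrow> i = j"
  unfolding zvar_def by (metis lookup_single_eq lookup_single_not_eq zero_neq_one)

lemma vandermonde_nonzero: "vandermonde k \<noteq> 0"
proof -
  have "\<forall>p\<in>pairs k. zvar (snd p) - zvar (fst p) \<noteq> 0"
    using zvar_inj by (fastforce simp: pairs_def)
  then show ?thesis unfolding vandermonde_def vandermonde_on_def by (simp add: finite_pairs)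
qed

text \<open>The monomial order of \<^theory>\<open>HOL-Library.Product_Lexorder\<close> makes \<^typ>\<open>lpoly\<close> an
  integral domain, so the nonzero Vandermonde product can be cancelled.\<close>
lemma inversion_sign_transpose_comp:
  assumes \<sigma>: "\<sigma> permutes {1..k}" and ab: "1 \<le> a" "a < b" "b \<le> k"
  shows "inversion_sign k (Transposition.transpose a b \<circ> \<sigma>) = (- inversion_sign k \<sigma> :: lpoly)"
proof -
  let ?t = "Transposition.transpose a b"
  have t: "?t permutes {1..k}" using ab by (intro permutes_swap_id) auto
  have "inversion_sign k (?t \<circ> \<sigma>) * vandermonde k = act (?t \<circ> \<sigma>) (vandermonde k)"
    using act_vandermonde[OF permutes_compose[OF \<sigma> t]] by simp
  also have "\<dots> = act ?t (act \<sigma> (vandermonde k))" by (simp add: act_comp)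
  also have "\<dots> = (- inversion_sign k \<sigma>) * vandermonde k"
    by (simp add: act_vandermonde[OF \<sigma>] act_vandermonde[OF t] act_mult inversion_sign_transpose[OF ab])
  finally show ?thesis using vandermonde_nonzero[of k] by (rule mult_right_cancel[THEN iffD1, rotated])
qed

lemma act_d_id_Fk: "in_Fk k P \<Longrightarrow> act_d id P = P"
proof -
  assume P: "in_Fk k P"
  have "act_dmon id m = m" if "m \<in> Poly_Mapping.keys P" for m
  proof -
    have "\<forall>p\<in>Poly_Mapping.keys m. fst p < snd p" using P that by (auto simp: in_Fk_def)
    then have "act_dmon id m = pm_push (\<lambda>x. x) (\<lambda>x. x) m"
      unfolding act_dmon_pm_push by (intro pm_push_cong) (auto simp: act_pair_def)
    then show ?thesis by (simp add: pm_push_id)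
  qed
  then have "act_d id P = pm_push (\<lambda>x. x) (\<lambda>x. x) P"
    unfolding act_d_pm_push by (intro pm_push_cong) auto
  then show ?thesis by (simp add: pm_push_id)
qed

lemma act_d_transpose_involution:
  "in_Fk k P \<Longrightarrow> act_d (Transposition.transpose a b) (act_d (Transposition.transpose a b) P) = P"
  using act_d_id_Fk by (simp add: act_d_comp)

definition zeta_num :: "nat \<Rightarrow> nat \<Rightarrow> lpoly" where
  "zeta_num i j = zvar j - zvar i + const (Delta i j) * zvar i"

definition shuffle_numerator :: "nat \<Rightarrow> (nat \<Rightarrow> int) \<Rightarrow> lpoly" where
  "shuffle_numerator k n = zmono k n * (\<Prod>p\<in>pairs k. zeta_num (fst p) (snd p))"

abbreviation perms :: "nat \<Rightarrow> (nat \<Rightarrow> nat) set" where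
  "perms k \<equiv> {\<sigma>. \<sigma> permutes {1..k}}"

definition alternant :: "nat \<Rightarrow> (nat \<Rightarrow> int) \<Rightarrow> lpoly" where
  "alternant k n = (\<Sum>\<sigma>\<in>perms k. inversion_sign k \<sigma> * act \<sigma> (shuffle_numerator k n))"

lemma finite_perms: "finite (perms k)"
  by (rule finite_permutations) simp

lemma act_zeta_num [simp]: "act \<sigma> (zeta_num i j) = zeta_num (\<sigma> i) (\<sigma> j)"
  by (simp add: zeta_num_def act_add act_diff act_mult)

lemma keys_zexp: "Poly_Mapping.keys (zexp k n) \<subseteq> {1..k}"
  unfolding zexp_def by (rule order.trans[OF keys_sum]) auto

lemma Fk_laurent_zmono: "Fk_laurent k (zmono k n)"
  unfolding zmono_def by (rule Fk_laurent_single[OF keys_zexp]) simp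

lemma Fk_laurent_zeta_num: "i \<in> {1..k} \<Longrightarrow> j \<in> {1..k} \<Longrightarrow> i \<noteq> j \<Longrightarrow> Fk_laurent k (zeta_num i j)"
  unfolding zeta_num_def
  by (intro Fk_laurent_add Fk_laurent_diff Fk_laurent_mult Fk_laurent_zvar Fk_laurent_const in_Fk_Delta)

lemma Fk_laurent_shuffle_numerator: "Fk_laurent k (shuffle_numerator k n)"
  unfolding shuffle_numerator_def
  by (intro Fk_laurent_mult Fk_laurent_zmono Fk_laurent_prod Fk_laurent_zeta_num) (auto simp: pairs_def)

lemma Fk_laurent_alternant: "Fk_laurent k (alternant k n)"
  unfolding alternant_def inversion_sign_def
  by (intro Fk_laurent_sum Fk_laurent_mult Fk_laurent_power Fk_laurent_uminus Fk_laurent_one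
      Fk_laurent_act Fk_laurent_shuffle_numerator) auto

lemma Fk_zero_Delta_antisymmetric:
  assumes ab: "a \<in> {1..k}" "b \<in> {1..k}" "a \<noteq> b" and W: "Fk_laurent k W"
  shows "Fk_zero k (const (Delta a b) * (W - act_coeffs (Transposition.transpose a b) W))"
  unfolding Fk_zero_def
proof
  fix e
  let ?t = "Transposition.transpose a b"
  let ?P = "Poly_Mapping.lookup W e - act_d ?t (Poly_Mapping.lookup W e)"
  have t: "?t permutes {1..k}" using ab by (intro permutes_swap_id) auto
  have "in_Fk k ?P" using Fk_laurent_lookup[OF W] in_Fk_act_d[OF t] by (intro in_Fk_diff) auto
  moreover have "act_d ?t ?P = - ?P"
    by (simp add: act_d_diff act_d_transpose_involution[OF Fk_laurent_lookup[OF W]])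
  ultimately have "Delta a b * ?P \<in> Fk_ideal k"
    by (rule Fk_ideal.gen[OF ab])
  then show "Poly_Mapping.lookup (const (Delta a b) * (W - act_coeffs ?t W)) e \<in> Fk_ideal k"
    by (simp add: lookup_const_mult lookup_minus lookup_act_coeffs)
qed

lemma act_shuffle_numerator_factor:
  assumes \<sigma>: "\<sigma> permutes {1..k}" and ij: "(i, j) \<in> pairs k"
  shows "\<exists>R. Fk_laurent k R \<and> act \<sigma> (shuffle_numerator k n) = zeta_num (\<sigma> i) (\<sigma> j) * R"
proof -
  let ?f = "\<lambda>p. zeta_num (\<sigma> (fst p)) (\<sigma> (snd p))"
  define R where "R = act \<sigma> (zmono k n) * (\<Prod>p\<in>pairs k - {(i, j)}. ?f p)"
  have "act \<sigma> (shuffle_numerator k n) = act \<sigma> (zmono k n) * (\<Prod>p\<in>pairs k. ?f p)"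
    by (simp add: shuffle_numerator_def act_mult act_prod)
  also have "\<dots> = zeta_num (\<sigma> i) (\<sigma> j) * R"
    using prod.remove[OF finite_pairs ij, of ?f] by (simp add: R_def mult_ac)
  finally have "act \<sigma> (shuffle_numerator k n) = zeta_num (\<sigma> i) (\<sigma> j) * R" .
  moreover have "Fk_laurent k R"
    unfolding R_def
  proof (intro Fk_laurent_mult Fk_laurent_act[OF \<sigma>] Fk_laurent_zmono Fk_laurent_prod Fk_laurent_zeta_num)
    fix p assume "p \<in> pairs k - {(i, j)}"
    then have "fst p \<in> {1..k}" "snd p \<in> {1..k}" "fst p \<noteq> snd p" by (auto simp: pairs_def)
    then show "\<sigma> (fst p) \<in> {1..k}" "\<sigma> (snd p) \<in> {1..k}" "\<sigma> (fst p) \<noteq> \<sigma> (snd p)"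
      using permutes_closed[OF \<sigma>] permutes_inj[OF \<sigma>] by (auto simp: inj_eq)
  qed
  ultimately show ?thesis by blast
qed

text \<open>Under \<open>z\<^sub>a := z\<^sub>b\<close> the factor \<open>\<zeta>\<^sub>a\<^sub>b\<close> of \<open>\<sigma> N\<close> becomes \<open>\<Delta>\<^sub>a\<^sub>b z\<^sub>b\<close>, and the term of
  \<open>(a b) \<circ> \<sigma>\<close> becomes minus the image of the term of \<open>\<sigma>\<close> under \<open>(a b)\<close> acting on
  coefficients only.\<close>
lemma subst_var_alternant_pair:
  assumes \<sigma>: "\<sigma> permutes {1..k}" and ab: "(a, b) \<in> pairs k" and lt: "inv \<sigma> a < inv \<sigma> b"
  shows "Fk_zero k (subst_var a b (inversion_sign k \<sigma> * act \<sigma> (shuffle_numerator k n) +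
      inversion_sign k (Transposition.transpose a b \<circ> \<sigma>) *
        act (Transposition.transpose a b \<circ> \<sigma>) (shuffle_numerator k n)))"
proof -
  let ?t = "Transposition.transpose a b"
  have ab': "a \<in> {1..k}" "b \<in> {1..k}" "a < b" "1 \<le> a" "b \<le> k" using ab by (auto simp: pairs_def)
  have "inv \<sigma> a \<in> {1..k}" "inv \<sigma> b \<in> {1..k}"
    using permutes_closed[OF permutes_inv[OF \<sigma>]] ab'(1,2) by auto
  then have "(inv \<sigma> a, inv \<sigma> b) \<in> pairs k" using lt by (auto simp: pairs_def)
  then obtain R where R: "Fk_laurent k R" "act \<sigma> (shuffle_numerator k n) = zeta_num a b * R"
    using act_shuffle_numerator_factor[OF \<sigma>] permutes_inverses(1)[OF \<sigma>] by metis
  define W where "W = zvar b * subst_var a b R"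
  have W: "Fk_laurent k W"
    unfolding W_def by (intro Fk_laurent_mult Fk_laurent_zvar Fk_laurent_subst_var R(1) ab'(1,2))
  have subst_N: "subst_var a b (act \<sigma> (shuffle_numerator k n)) = const (Delta a b) * W"
    unfolding R(2) W_def by (simp add: subst_var_mult zeta_num_def subst_var_add subst_var_diff)
  have "subst_var a b (inversion_sign k \<sigma> * act \<sigma> (shuffle_numerator k n) +
        inversion_sign k (?t \<circ> \<sigma>) * act (?t \<circ> \<sigma>) (shuffle_numerator k n)) =
      inversion_sign k \<sigma> * (subst_var a b (act \<sigma> (shuffle_numerator k n)) -
        subst_var a b (act ?t (act \<sigma> (shuffle_numerator k n))))"
    by (simp add: inversion_sign_transpose_comp[OF \<sigma> ab'(4,3,5)] act_comp subst_var_add subst_var_diff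
        subst_var_uminus subst_var_mult algebra_simps)
  also have "\<dots> = inversion_sign k \<sigma> * (const (Delta a b) * (W - act_coeffs ?t W))"
    by (simp add: subst_var_act_transpose subst_N act_coeffs_mult Delta_sym[of b a] algebra_simps)
  finally show ?thesis
    using Fk_zero_Delta_antisymmetric[OF ab'(1,2) _ W] ab'(3) by (simp add: Fk_zero_mult_left)
qed

lemma sum_pair_up_involution:
  assumes "finite S" "H \<subseteq> S" "\<And>x. x \<in> S \<Longrightarrow> g x \<in> S" "\<And>x. x \<in> S \<Longrightarrow> g (g x) = x"
    and "\<And>x. x \<in> S \<Longrightarrow> x \<in> H \<longleftrightarrow> g x \<notin> H"
  shows "(\<Sum>x\<in>S. f x) = (\<Sum>x\<in>H. f x + f (g x))"
proof -
  have "bij_betw g H (S - H)"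
    by (rule bij_betw_byWitness[where f' = g]) (use assms in blast)+
  then have "(\<Sum>x\<in>S - H. f x) = (\<Sum>x\<in>H. f (g x))"
    by (rule sum.reindex_bij_betw[symmetric])
  moreover have "(\<Sum>x\<in>S. f x) = (\<Sum>x\<in>H. f x) + (\<Sum>x\<in>S - H. f x)"
    using sum.subset_diff[OF assms(2,1)] by (simp add: add.commute)
  ultimately show ?thesis by (simp add: sum.distrib)
qed

lemma alternant_vanishes_on_diagonal:
  assumes ab: "(a, b) \<in> pairs k"
  shows "Fk_zero k (subst_var a b (alternant k n))"
proof -
  let ?t = "Transposition.transpose a b"
  let ?H = "{\<sigma> \<in> perms k. inv \<sigma> a < inv \<sigma> b}"
  define f where "f \<sigma> = inversion_sign k \<sigma> * act \<sigma> (shuffle_numerator k n)" for \<sigma>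
  have ab': "a \<in> {1..k}" "b \<in> {1..k}" "a \<noteq> b" using ab by (auto simp: pairs_def)
  have t: "?t permutes {1..k}" using ab' by (intro permutes_swap_id) auto
  have inv_t: "inv (?t \<circ> \<sigma>) a = inv \<sigma> b" "inv (?t \<circ> \<sigma>) b = inv \<sigma> a" if "\<sigma> permutes {1..k}" for \<sigma>
    using that permutes_bij[OF t] by (simp_all add: o_inv_distrib permutes_bij)
  have "alternant k n = (\<Sum>\<sigma>\<in>?H. f \<sigma> + f (?t \<circ> \<sigma>))"
    unfolding alternant_def f_def
  proof (rule sum_pair_up_involution[OF finite_perms])
    fix \<sigma> assume "\<sigma> \<in> perms k"
    then have \<sigma>: "\<sigma> permutes {1..k}" by simp
    show "?t \<circ> \<sigma> \<in> perms k" using permutes_compose[OF \<sigma> t] by simp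
    show "?t \<circ> (?t \<circ> \<sigma>) = \<sigma>" by (simp add: comp_assoc[symmetric])
    have "inv \<sigma> a \<noteq> inv \<sigma> b"
      using ab'(3) permutes_inj[OF permutes_inv[OF \<sigma>]] by (auto dest: injD)
    then show "\<sigma> \<in> ?H \<longleftrightarrow> ?t \<circ> \<sigma> \<notin> ?H"
      using \<sigma> permutes_compose[OF \<sigma> t] by (auto simp: inv_t[OF \<sigma>])
  qed auto
  then have "subst_var a b (alternant k n) = (\<Sum>\<sigma>\<in>?H. subst_var a b (f \<sigma> + f (?t \<circ> \<sigma>)))"
    by (simp add: subst_var_sum)
  also have "Fk_zero k \<dots>"
    unfolding f_def by (rule Fk_zero_sum) (auto intro: subst_var_alternant_pair[OF _ ab])
  finally show ?thesis .
qed

section \<open>Leading terms\<close>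

definition has_lead_term :: "('a::linorder \<Rightarrow>\<^sub>0 'b::zero) \<Rightarrow> 'a \<Rightarrow> 'b \<Rightarrow> bool" where
  "has_lead_term A \<alpha> c \<longleftrightarrow> (\<forall>e\<in>Poly_Mapping.keys A. e \<le> \<alpha>) \<and> Poly_Mapping.lookup A \<alpha> = c"

lemma has_lead_term_le: "has_lead_term A \<alpha> c \<Longrightarrow> e \<in> Poly_Mapping.keys A \<Longrightarrow> e \<le> \<alpha>"
  by (simp add: has_lead_term_def)

lemma has_lead_term_lookup: "has_lead_term A \<alpha> c \<Longrightarrow> Poly_Mapping.lookup A \<alpha> = c"
  by (simp add: has_lead_term_def)

lemma has_lead_term_zero_above: "has_lead_term A \<alpha> c \<Longrightarrow> \<alpha> < e \<Longrightarrow> Poly_Mapping.lookup A e = 0"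
  by (metis has_lead_term_def in_keys_iff leD)

lemma lookup_mult_right_keys:
  fixes A B :: "'a::ab_group_add \<Rightarrow>\<^sub>0 'b::comm_ring_1"
  shows "Poly_Mapping.lookup (A * B) x = (\<Sum>b\<in>Poly_Mapping.keys B. Poly_Mapping.lookup A (x - b) * Poly_Mapping.lookup B b)"
proof -
  have "A * B = B * A" by (rule mult.commute)
  also have "\<dots> = (\<Sum>b\<in>Poly_Mapping.keys B. Poly_Mapping.single b (Poly_Mapping.lookup B b) * A)"
    by (subst (1) poly_mapping_sum_singles[of B]) (simp add: sum_distrib_right)
  finally show ?thesis by (simp add: lookup_sum lookup_single_mult) (simp add: mult.commute)
qed

lemma lookup_mult_at_lead:
  fixes A B :: "'a::linordered_ab_group_add \<Rightarrow>\<^sub>0 'b::comm_ring_1"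
  assumes A: "has_lead_term A \<alpha> a"
  shows "Poly_Mapping.lookup (A * B) (\<alpha> + \<beta>) = a * Poly_Mapping.lookup B \<beta> +
    (\<Sum>b\<in>{b \<in> Poly_Mapping.keys B. \<beta> < b}. Poly_Mapping.lookup A (\<alpha> + \<beta> - b) * Poly_Mapping.lookup B b)"
proof -
  let ?g = "\<lambda>b. Poly_Mapping.lookup A (\<alpha> + \<beta> - b) * Poly_Mapping.lookup B b"
  have below: "?g b = 0" if "b \<noteq> \<beta>" "\<not> \<beta> < b" for b
    using has_lead_term_zero_above[OF A, of "\<alpha> + \<beta> - b"] that by simp
  have "Poly_Mapping.lookup (A * B) (\<alpha> + \<beta>) = (\<Sum>b\<in>insert \<beta> (Poly_Mapping.keys B). ?g b)"
    unfolding lookup_mult_right_keys by (rule sum.mono_neutral_left) (auto simp: in_keys_iff)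
  also have "\<dots> = ?g \<beta> + (\<Sum>b\<in>Poly_Mapping.keys B - {\<beta>}. ?g b)"
    by (simp add: sum.insert_remove)
  also have "(\<Sum>b\<in>Poly_Mapping.keys B - {\<beta>}. ?g b) = (\<Sum>b\<in>{b \<in> Poly_Mapping.keys B. \<beta> < b}. ?g b)"
    by (rule sum.mono_neutral_right) (auto simp: below)
  finally show ?thesis using has_lead_term_lookup[OF A] by simp
qed

lemma has_lead_term_mult:
  fixes A B :: "'a::linordered_ab_group_add \<Rightarrow>\<^sub>0 'b::comm_ring_1"
  assumes A: "has_lead_term A \<alpha> a" and B: "has_lead_term B \<beta> b"
  shows "has_lead_term (A * B) (\<alpha> + \<beta>) (a * b)"
  unfolding has_lead_term_def
proof
  show "\<forall>e\<in>Poly_Mapping.keys (A * B). e \<le> \<alpha> + \<beta>"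
    using keys_mult[of A B] has_lead_term_le[OF A] has_lead_term_le[OF B] by (fastforce intro: add_mono)
  have none_above: "{c \<in> Poly_Mapping.keys B. \<beta> < c} = {}"
    using has_lead_term_le[OF B] by (auto simp: not_less[symmetric])
  show "Poly_Mapping.lookup (A * B) (\<alpha> + \<beta>) = a * b"
    using lookup_mult_at_lead[OF A, of B \<beta>, unfolded none_above] has_lead_term_lookup[OF B] by simp
qed

lemma has_lead_term_one: "has_lead_term 1 0 1"
  by (simp add: has_lead_term_def)

lemma has_lead_term_prod:
  fixes f :: "'i \<Rightarrow> 'a::linordered_ab_group_add \<Rightarrow>\<^sub>0 'b::comm_ring_1"
  assumes "finite I" "\<And>i. i \<in> I \<Longrightarrow> has_lead_term (f i) (\<alpha> i) (c i)"
  shows "has_lead_term (\<Prod>i\<in>I. f i) (\<Sum>i\<in>I. \<alpha> i) (\<Prod>i\<in>I. c i)"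
  using assms by (induction I rule: finite_induct) (auto simp: has_lead_term_one intro: has_lead_term_mult)

lemma has_lead_term_single: "has_lead_term (Poly_Mapping.single e c) e c"
  by (simp add: has_lead_term_def)

lemma single_one_less: "i < j \<Longrightarrow> (Poly_Mapping.single j (1::int)) < Poly_Mapping.single i 1"
  unfolding less_poly_mapping.rep_eq less_fun_def
  by (intro exI[of _ i]) (auto simp: lookup_single)

lemma keys_zvar_add_const_mult:
  "Poly_Mapping.keys (zvar y + const c * zvar x) \<subseteq> {Poly_Mapping.single y 1, Poly_Mapping.single x 1}"
  using keys_add[of "zvar y" "const c * zvar x"]
  by (auto simp: zvar_def const_def mult_single split: if_split_asm)

lemma has_lead_term_zvar_add_const_mult_less:
  assumes "x < y"
  shows "has_lead_term (zvar y + const c * zvar x) (Poly_Mapping.single x 1) c"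
  using single_one_less[OF assms] keys_zvar_add_const_mult[of y c x] unfolding has_lead_term_def
  by (auto simp: zvar_def const_def mult_single lookup_add lookup_single when_def)

lemma has_lead_term_zvar_add_const_mult_greater:
  assumes "y < x"
  shows "has_lead_term (zvar y + const c * zvar x) (Poly_Mapping.single y 1) 1"
  using single_one_less[OF assms] keys_zvar_add_const_mult[of y c x] unfolding has_lead_term_def
  by (auto simp: zvar_def const_def mult_single lookup_add lookup_single when_def)

lemma zeta_num_eq: "zeta_num i j = zvar j + const (Delta i j - 1) * zvar i"
  by (simp add: zeta_num_def const_def single_diff algebra_simps flip: single_one)

definition rho :: "nat \<Rightarrow> (nat \<Rightarrow>\<^sub>0 int)" where
  "rho k = (\<Sum>p\<in>pairs k. Poly_Mapping.single (fst p) 1)"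

lemma has_lead_term_vandermonde: "has_lead_term (vandermonde k) (rho k) ((- 1) ^ card (pairs k))"
proof -
  have "has_lead_term (vandermonde k) (\<Sum>p\<in>pairs k. Poly_Mapping.single (fst p) 1) (\<Prod>p\<in>pairs k. - 1)"
    unfolding vandermonde_def vandermonde_on_def
  proof (rule has_lead_term_prod[OF finite_pairs])
    fix p assume "p \<in> pairs k"
    then have "fst p < snd p" by (auto simp: pairs_def)
    moreover have "zvar (snd p) - zvar (fst p) = zvar (snd p) + const (- 1) * zvar (fst p)"
      by (simp add: const_def single_uminus)
    ultimately show "has_lead_term (zvar (snd p) - zvar (fst p)) (Poly_Mapping.single (fst p) 1) (- 1)"
      using has_lead_term_zvar_add_const_mult_less by metis
  qed
  then show ?thesis by (simp add: rho_def)
qed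

definition zeta_lead_coeff :: "(nat \<Rightarrow> nat) \<Rightarrow> nat \<times> nat \<Rightarrow> dpoly" where
  "zeta_lead_coeff \<sigma> p = (if \<sigma> (fst p) < \<sigma> (snd p) then Delta (\<sigma> (fst p)) (\<sigma> (snd p)) - 1 else 1)"

lemma has_lead_term_act_shuffle_numerator:
  assumes \<sigma>: "\<sigma> permutes {1..k}"
  shows "has_lead_term (act \<sigma> (shuffle_numerator k n))
    (act_zexp \<sigma> (zexp k n) + rho k) (\<Prod>p\<in>pairs k. zeta_lead_coeff \<sigma> p)"
proof -
  have zetas: "has_lead_term (\<Prod>p\<in>pairs k. zeta_num (\<sigma> (fst p)) (\<sigma> (snd p)))
     (\<Sum>p\<in>pairs k. Poly_Mapping.single (fst (act_pair \<sigma> p)) 1) (\<Prod>p\<in>pairs k. zeta_lead_coeff \<sigma> p)"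
  proof (rule has_lead_term_prod[OF finite_pairs])
    fix p assume "p \<in> pairs k"
    then have "fst p \<noteq> snd p" by (auto simp: pairs_def)
    then have "\<sigma> (fst p) \<noteq> \<sigma> (snd p)" using permutes_inj[OF \<sigma>] by (auto simp: inj_eq)
    then consider "\<sigma> (fst p) < \<sigma> (snd p)" | "\<sigma> (snd p) < \<sigma> (fst p)" by linarith
    then show "has_lead_term (zeta_num (\<sigma> (fst p)) (\<sigma> (snd p)))
        (Poly_Mapping.single (fst (act_pair \<sigma> p)) 1) (zeta_lead_coeff \<sigma> p)"
      by cases (simp_all add: zeta_num_eq zeta_lead_coeff_def act_pair_def
          has_lead_term_zvar_add_const_mult_less has_lead_term_zvar_add_const_mult_greater)
  qed
  have "(\<Sum>p\<in>pairs k. Poly_Mapping.single (fst (act_pair \<sigma> p)) (1::int)) = rho k"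
    unfolding rho_def by (rule sum.reindex_bij_betw[OF act_pair_bij[OF \<sigma>]])
  moreover have "act \<sigma> (shuffle_numerator k n) =
      Poly_Mapping.single (act_zexp \<sigma> (zexp k n)) 1 * (\<Prod>p\<in>pairs k. zeta_num (\<sigma> (fst p)) (\<sigma> (snd p)))"
    by (simp add: shuffle_numerator_def act_mult act_prod zmono_def) (simp add: act_pm_push pm_push_single)
  ultimately show ?thesis
    using has_lead_term_mult[OF has_lead_term_single[of "act_zexp \<sigma> (zexp k n)" 1] zetas] by simp
qed

lemma lookup_zexp: "Poly_Mapping.lookup (zexp k n) x = (if x \<in> {1..k} then n x else 0)"
  unfolding zexp_def lookup_sum lookup_single by (simp add: when_def)

lemma lookup_act_zexp_zexp:
  assumes \<sigma>: "\<sigma> permutes {1..k}"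
  shows "Poly_Mapping.lookup (act_zexp \<sigma> (zexp k n)) x = (if x \<in> {1..k} then n (inv \<sigma> x) else 0)"
  using permutes_in_image[OF permutes_inv[OF \<sigma>], of x]
  by (simp add: lookup_act_zexp[OF permutes_bij[OF \<sigma>]] lookup_zexp)

text \<open>A rearrangement of a decreasing sequence is lexicographically at most the sequence:
  at the first position \<open>x\<close> where \<open>n \<circ> inv \<sigma>\<close> would exceed \<open>n\<close>, the permutation \<open>inv \<sigma>\<close>
  would map \<open>x\<close> together with the positions \<open>i\<close> where \<open>n i > n x\<close> injectively into the latter.\<close>
lemma act_zexp_zexp_le:
  assumes \<sigma>: "\<sigma> permutes {1..k}"
    and dec: "\<And>i j. 1 \<le> i \<Longrightarrow> i \<le> j \<Longrightarrow> j \<le> k \<Longrightarrow> n j \<le> n i"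
  shows "act_zexp \<sigma> (zexp k n) \<le> zexp k n"
proof (rule ccontr)
  let ?t = "inv \<sigma>"
  have t: "?t permutes {1..k}" using permutes_inv[OF \<sigma>] .
  assume "\<not> act_zexp \<sigma> (zexp k n) \<le> zexp k n"
  then obtain x where x: "Poly_Mapping.lookup (zexp k n) x < Poly_Mapping.lookup (act_zexp \<sigma> (zexp k n)) x"
    and before: "\<And>y. y < x \<Longrightarrow> Poly_Mapping.lookup (zexp k n) y = Poly_Mapping.lookup (act_zexp \<sigma> (zexp k n)) y"
    unfolding not_le less_poly_mapping.rep_eq less_fun_def by blast
  have x_range: "x \<in> {1..k}"
    using x by (auto simp: lookup_zexp lookup_act_zexp_zexp[OF \<sigma>] split: if_splits)
  then have nx: "n x < n (?t x)" using x by (simp add: lookup_zexp lookup_act_zexp_zexp[OF \<sigma>])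
  define S where "S = {i \<in> {1..k}. n x < n i}"
  have S_before: "i < x" if "i \<in> S" for i
    using dec[of x i] that x_range by (force simp: S_def)
  have "?t ` insert x S \<subseteq> S"
  proof
    fix y assume "y \<in> ?t ` insert x S"
    then obtain i where i: "i \<in> insert x S" "y = ?t i" by auto
    show "y \<in> S"
    proof (cases "i = x")
      case True
      then show ?thesis using i nx permutes_closed[OF t x_range] by (simp add: S_def)
    next
      case False
      then have "i \<in> S" using i by simp
      then have "i \<in> {1..k}" "n x < n i" "n (?t i) = n i"
        using before[OF S_before] by (auto simp: S_def lookup_zexp lookup_act_zexp_zexp[OF \<sigma>])
      then show ?thesis using i permutes_closed[OF t] by (simp add: S_def)
    qed
  qed
  then have "card (insert x S) \<le> card S"
    by (rule card_inj_on_le[OF inj_on_subset[OF permutes_inj[OF t] subset_UNIV]]) (simp add: S_def)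
  moreover have "x \<notin> S" "finite S" by (simp_all add: S_def)
  ultimately show False by simp
qed

lemma act_zexp_zexp_eq_iff:
  assumes \<sigma>: "\<sigma> permutes {1..k}"
  shows "act_zexp \<sigma> (zexp k n) = zexp k n \<longleftrightarrow> (\<forall>x\<in>{1..k}. n (inv \<sigma> x) = n x)"
  unfolding poly_mapping_eq_iff fun_eq_iff by (auto simp: lookup_zexp lookup_act_zexp_zexp[OF \<sigma>])

lemma preserves_inv_iff:
  assumes \<sigma>: "\<sigma> permutes {1..k}"
  shows "(\<forall>x\<in>{1..k}. n (inv \<sigma> x) = n x) \<longleftrightarrow> (\<forall>x\<in>{1..k}. n (\<sigma> x) = n x)"
proof
  assume inv_pres: "\<forall>x\<in>{1..k}. n (inv \<sigma> x) = n x"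
  show "\<forall>x\<in>{1..k}. n (\<sigma> x) = n x"
    using inv_pres[rule_format, OF permutes_closed[OF \<sigma>]] permutes_inverses(2)[OF \<sigma>] by simp
next
  assume pres: "\<forall>x\<in>{1..k}. n (\<sigma> x) = n x"
  show "\<forall>x\<in>{1..k}. n (inv \<sigma> x) = n x"
    using pres[rule_format, OF permutes_closed[OF permutes_inv[OF \<sigma>]]] permutes_inverses(1)[OF \<sigma>] by simp
qed

lemma permutes_moves_into:
  assumes \<tau>: "\<tau> permutes S" and T: "finite T" "T \<subseteq> S" and i: "i \<in> T" "\<tau> i \<notin> T"
  shows "\<exists>j \<in> S - T. \<tau> j \<in> T"
proof (rule ccontr)
  assume none: "\<not> ?thesis"
  have "T \<subseteq> \<tau> ` T"
  proof
    fix t assume t: "t \<in> T"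
    have t_eq: "\<tau> (inv \<tau> t) = t" using permutes_inverses(1)[OF \<tau>] .
    have "inv \<tau> t \<in> S" using permutes_closed[OF permutes_inv[OF \<tau>]] t T(2) by blast
    then have "inv \<tau> t \<in> T" using none t t_eq by (metis DiffI)
    then show "t \<in> \<tau> ` T" using t_eq by (metis image_eqI)
  qed
  moreover have "card (\<tau> ` T) = card T"
    by (rule card_image[OF inj_on_subset[OF permutes_inj[OF \<tau>] subset_UNIV]])
  ultimately have "\<tau> ` T = T" by (intro card_subset_eq[symmetric]) (simp_all add: T(1))
  then show False using i by blast
qed

text \<open>If \<open>\<tau>\<close> moved \<open>i\<close> out of the upper set \<open>{n \<ge> v}\<close>, some \<open>j\<close> outside it would move in,
  and \<open>(i, j)\<close> would be an inversion of \<open>\<tau>\<close> with \<open>n i \<noteq> n j\<close>.\<close>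
lemma admissible_upper_set:
  assumes \<tau>: "\<tau> permutes {1..k}"
    and dec: "\<And>i j. 1 \<le> i \<Longrightarrow> i \<le> j \<Longrightarrow> j \<le> k \<Longrightarrow> n j \<le> n i"
    and adm: "admissible k n \<tau>" and i: "i \<in> {1..k}" "v \<le> n i"
  shows "v \<le> n (\<tau> i)"
proof (rule ccontr)
  assume out: "\<not> v \<le> n (\<tau> i)"
  define T where "T = {j \<in> {1..k}. v \<le> n j}"
  have "\<exists>j \<in> {1..k} - T. \<tau> j \<in> T"
    by (rule permutes_moves_into[OF \<tau>]) (use i out in \<open>auto simp: T_def\<close>)
  then obtain j where j: "j \<in> {1..k}" "j \<notin> T" "\<tau> j \<in> T" by blast
  have "i < j"
  proof (rule ccontr)
    assume "\<not> i < j"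
    then have "n i \<le> n j" using dec[of j i] i j by simp
    then show False using i j by (simp add: T_def)
  qed
  moreover have "\<tau> j < \<tau> i"
  proof (rule ccontr)
    assume "\<not> \<tau> j < \<tau> i"
    then have "n (\<tau> j) \<le> n (\<tau> i)"
      using dec[of "\<tau> i" "\<tau> j"] permutes_closed[OF \<tau> i(1)] permutes_closed[OF \<tau> j(1)] by simp
    then show False using out j by (simp add: T_def)
  qed
  ultimately have "n j = n i"
    using adm i j unfolding admissible_def by blast
  then show False using i j by (simp add: T_def)
qed

lemma admissible_iff_preserves:
  assumes \<tau>: "\<tau> permutes {1..k}"
    and dec: "\<And>i j. 1 \<le> i \<Longrightarrow> i \<le> j \<Longrightarrow> j \<le> k \<Longrightarrow> n j \<le> n i"
  shows "admissible k n \<tau> \<longleftrightarrow> (\<forall>x\<in>{1..k}. n (\<tau> x) = n x)"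
proof
  assume adm: "admissible k n \<tau>"
  have ge: "\<forall>x\<in>{1..k}. n x \<le> n (\<tau> x)"
    using admissible_upper_set[OF \<tau> dec adm _ order.refl] by blast
  have "(\<Sum>x\<in>{1..k}. n (\<tau> x)) = (\<Sum>x\<in>{1..k}. n x)"
    by (rule sum.reindex_bij_betw[OF permutes_imp_bij[OF \<tau>]])
  then have "\<not> (\<exists>x\<in>{1..k}. n x < n (\<tau> x))"
    using sum_strict_mono_ex1[OF _ ge] by fastforce
  then show "\<forall>x\<in>{1..k}. n (\<tau> x) = n x"
    using ge by (fastforce simp: le_less)
next
  assume pres: "\<forall>x\<in>{1..k}. n (\<tau> x) = n x"
  show "admissible k n \<tau>"
    unfolding admissible_def
  proof (intro ballI impI)
    fix i j assume i: "i \<in> {1..k}" and j: "j \<in> {1..k}" and ij: "j < i \<and> \<tau> i < \<tau> j"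
    have "n i \<le> n j" using dec[of j i] i j ij by auto
    moreover have "n (\<tau> j) \<le> n (\<tau> i)"
      using dec[of "\<tau> i" "\<tau> j"] permutes_closed[OF \<tau> i] permutes_closed[OF \<tau> j] ij by auto
    ultimately show "n i = n j" using pres i j by auto
  qed
qed

definition lead_factor :: "nat \<Rightarrow> (nat \<Rightarrow> nat) \<Rightarrow> dpoly" where
  "lead_factor k \<sigma> = (\<Prod>p\<in>{p \<in> pairs k. \<sigma> (fst p) < \<sigma> (snd p)}. 1 - Delta (\<sigma> (fst p)) (\<sigma> (snd p)))"

lemma lead_factor_inv:
  assumes \<tau>: "\<tau> permutes {1..k}"
  shows "lead_factor k (inv \<tau>) = (\<Prod>(i, j)\<in>{(i, j) \<in> pairs k. \<tau> i < \<tau> j}. 1 - Delta i j)"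
proof -
  let ?h = "\<lambda>p. (inv \<tau> (fst p), inv \<tau> (snd p))"
  let ?h' = "\<lambda>q. (\<tau> (fst q), \<tau> (snd q))"
  have \<tau>_range: "\<tau> x \<in> {1..k}" "inv \<tau> x \<in> {1..k}" if "x \<in> {1..k}" for x
    using that permutes_closed[OF \<tau>] permutes_closed[OF permutes_inv[OF \<tau>]] by auto
  have "bij_betw ?h {p \<in> pairs k. inv \<tau> (fst p) < inv \<tau> (snd p)} {(i, j) \<in> pairs k. \<tau> i < \<tau> j}"
  proof (rule bij_betw_byWitness[where f' = ?h'])
    show "?h ` {p \<in> pairs k. inv \<tau> (fst p) < inv \<tau> (snd p)} \<subseteq> {(i, j) \<in> pairs k. \<tau> i < \<tau> j}"
    proof
      fix q assume "q \<in> ?h ` {p \<in> pairs k. inv \<tau> (fst p) < inv \<tau> (snd p)}"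
      then obtain p where p: "p \<in> pairs k" "inv \<tau> (fst p) < inv \<tau> (snd p)" "q = ?h p" by blast
      then have "fst p \<in> {1..k}" "snd p \<in> {1..k}" by (auto simp: pairs_def)
      then show "q \<in> {(i, j) \<in> pairs k. \<tau> i < \<tau> j}"
        using p \<tau>_range permutes_inverses(1)[OF \<tau>] by (auto simp: pairs_def)
    qed
    show "?h' ` {(i, j) \<in> pairs k. \<tau> i < \<tau> j} \<subseteq> {p \<in> pairs k. inv \<tau> (fst p) < inv \<tau> (snd p)}"
    proof
      fix q assume "q \<in> ?h' ` {(i, j) \<in> pairs k. \<tau> i < \<tau> j}"
      then obtain p where p: "p \<in> pairs k" "\<tau> (fst p) < \<tau> (snd p)" "q = ?h' p" by auto
      then have "fst p \<in> {1..k}" "snd p \<in> {1..k}" by (auto simp: pairs_def)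
      then show "q \<in> {p \<in> pairs k. inv \<tau> (fst p) < inv \<tau> (snd p)}"
        using p \<tau>_range permutes_inverses(2)[OF \<tau>] by (auto simp: pairs_def)
    qed
  qed (simp_all add: permutes_inverses[OF \<tau>])
  then show ?thesis
    unfolding lead_factor_def by (simp add: prod.reindex_bij_betw[symmetric] split_def)
qed

lemma lead_coeff_shuffle_eq:
  assumes dec: "\<And>i j. 1 \<le> i \<Longrightarrow> i \<le> j \<Longrightarrow> j \<le> k \<Longrightarrow> n j \<le> n i"
  shows "lead_coeff_shuffle k n = (\<Sum>\<sigma>\<in>{\<sigma> \<in> perms k. act_zexp \<sigma> (zexp k n) = zexp k n}. lead_factor k \<sigma>)"
proof -
  let ?S = "{\<tau>. \<tau> permutes {1..k} \<and> admissible k n \<tau>}"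
  let ?T = "{\<sigma> \<in> perms k. act_zexp \<sigma> (zexp k n) = zexp k n}"
  have "bij_betw inv ?S ?T"
    by (rule bij_betw_byWitness[where f' = inv])
      (auto simp: permutes_inv_inv permutes_inv act_zexp_zexp_eq_iff admissible_iff_preserves[OF _ dec]
         preserves_inv_iff)
  then have "(\<Sum>\<sigma>\<in>?T. lead_factor k \<sigma>) = (\<Sum>\<tau>\<in>?S. lead_factor k (inv \<tau>))"
    by (rule sum.reindex_bij_betw[symmetric])
  also have "\<dots> = lead_coeff_shuffle k n"
    unfolding lead_coeff_shuffle_def by (rule sum.cong) (auto simp: lead_factor_inv)
  finally show ?thesis ..
qed

lemma inversion_sign_zeta_lead_coeff:
  assumes \<sigma>: "\<sigma> permutes {1..k}"
  shows "inversion_sign k \<sigma> * (\<Prod>p\<in>pairs k. zeta_lead_coeff \<sigma> p) = (- 1) ^ card (pairs k) * lead_factor k \<sigma>"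
proof -
  let ?N = "{p \<in> pairs k. \<sigma> (fst p) < \<sigma> (snd p)}"
  have "(\<Prod>p\<in>pairs k. zeta_lead_coeff \<sigma> p) = (\<Prod>p\<in>?N. (- 1) * (1 - Delta (\<sigma> (fst p)) (\<sigma> (snd p))))"
    by (rule prod.mono_neutral_cong_right) (auto simp: finite_pairs zeta_lead_coeff_def)
  also have "\<dots> = (- 1) ^ card ?N * lead_factor k \<sigma>"
    unfolding prod.distrib prod_constant lead_factor_def by (rule refl)
  finally have zetas: "(\<Prod>p\<in>pairs k. zeta_lead_coeff \<sigma> p) = (- 1) ^ card ?N * lead_factor k \<sigma>" .
  have "\<sigma> (fst p) \<noteq> \<sigma> (snd p)" if "p \<in> pairs k" for p
    using that permutes_inj[OF \<sigma>] by (auto simp: pairs_def inj_eq)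
  then have "pairs k = inversions k \<sigma> \<union> ?N"
    unfolding inversions_def using linorder_neq_iff by blast
  then have "card (pairs k) = card (inversions k \<sigma> \<union> ?N)" by (rule arg_cong)
  also have "\<dots> = card (inversions k \<sigma>) + card ?N"
    using finite_pairs by (intro card_Un_disjoint) (auto simp: inversions_def)
  finally have "card (inversions k \<sigma>) + card ?N = card (pairs k)" ..
  then show ?thesis unfolding zetas inversion_sign_def by (simp add: power_add[symmetric] mult.assoc)
qed

lemma has_lead_term_alternant:
  assumes dec: "\<And>i j. 1 \<le> i \<Longrightarrow> i \<le> j \<Longrightarrow> j \<le> k \<Longrightarrow> n j \<le> n i"
  shows "has_lead_term (alternant k n) (zexp k n + rho k) ((- 1) ^ card (pairs k) * lead_coeff_shuffle k n)"
proof -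
  let ?z = "zexp k n" and ?c = "(- 1) ^ card (pairs k) :: dpoly"
  let ?f = "\<lambda>\<sigma>. inversion_sign k \<sigma> * act \<sigma> (shuffle_numerator k n)"
  have lead_term: "has_lead_term (?f \<sigma>) (act_zexp \<sigma> ?z + rho k)
      (inversion_sign k \<sigma> * (\<Prod>p\<in>pairs k. zeta_lead_coeff \<sigma> p))" if \<sigma>: "\<sigma> permutes {1..k}" for \<sigma>
    using has_lead_term_mult[OF has_lead_term_single[of 0] has_lead_term_act_shuffle_numerator[OF \<sigma>]]
    by (simp flip: const_inversion_sign add: const_def)
  have keys_le: "e \<le> ?z + rho k" if e: "e \<in> Poly_Mapping.keys (alternant k n)" for e
  proof -
    obtain \<sigma> where \<sigma>: "\<sigma> permutes {1..k}" "e \<in> Poly_Mapping.keys (?f \<sigma>)"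
      using e keys_sum[of ?f "perms k"] unfolding alternant_def by blast
    then have "e \<le> act_zexp \<sigma> ?z + rho k" using has_lead_term_le[OF lead_term] by blast
    also have "\<dots> \<le> ?z + rho k" using act_zexp_zexp_le[of \<sigma> k n, OF \<sigma>(1) dec] by simp
    finally show ?thesis .
  qed
  have coeff: "Poly_Mapping.lookup (?f \<sigma>) (?z + rho k) =
      (if act_zexp \<sigma> ?z = ?z then ?c * lead_factor k \<sigma> else 0)" if \<sigma>: "\<sigma> permutes {1..k}" for \<sigma>
  proof (cases "act_zexp \<sigma> ?z = ?z")
    case True
    then show ?thesis
      using has_lead_term_lookup[OF lead_term[OF \<sigma>]] inversion_sign_zeta_lead_coeff[OF \<sigma>] by simp
  next
    case False
    then have "act_zexp \<sigma> ?z + rho k < ?z + rho k"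
      using act_zexp_zexp_le[of \<sigma> k n, OF \<sigma> dec] by simp
    then show ?thesis using False has_lead_term_zero_above[OF lead_term[OF \<sigma>]] by simp
  qed
  have "Poly_Mapping.lookup (alternant k n) (?z + rho k) =
      (\<Sum>\<sigma>\<in>perms k. if act_zexp \<sigma> ?z = ?z then ?c * lead_factor k \<sigma> else 0)"
    unfolding alternant_def lookup_sum by (rule sum.cong[OF refl]) (simp add: coeff)
  also have "\<dots> = (\<Sum>\<sigma>\<in>{\<sigma> \<in> perms k. act_zexp \<sigma> ?z = ?z}. ?c * lead_factor k \<sigma>)"
    by (rule sum.mono_neutral_cong_right) (simp add: finite_permutations, blast, simp_all)
  also have "\<dots> = ?c * lead_coeff_shuffle k n"
    by (simp add: lead_coeff_shuffle_eq[OF dec] sum_distrib_left)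
  finally show ?thesis using keys_le by (simp add: has_lead_term_def)
qed

lemma Fk_ideal_cancel_unit: "u * u = 1 \<Longrightarrow> u * a \<in> Fk_ideal k \<Longrightarrow> a \<in> Fk_ideal k"
  using Fk_ideal.mult[of "u * a" k u] by (simp add: mult.assoc[symmetric])

lemma lookup_mult_at_lead_mod:
  fixes V L :: lpoly
  assumes V: "has_lead_term V \<rho> u"
    and above: "\<And>b. b \<in> Poly_Mapping.keys L \<Longrightarrow> \<beta> < b \<Longrightarrow> Poly_Mapping.lookup L b \<in> Fk_ideal k"
  shows "Poly_Mapping.lookup (V * L) (\<rho> + \<beta>) - u * Poly_Mapping.lookup L \<beta> \<in> Fk_ideal k"
proof -
  have "(\<Sum>b\<in>{b \<in> Poly_Mapping.keys L. \<beta> < b}. Poly_Mapping.lookup V (\<rho> + \<beta> - b) * Poly_Mapping.lookup L b)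
      \<in> Fk_ideal k"
    by (rule Fk_ideal_sum) (auto intro: Fk_ideal.mult above)
  then show ?thesis using lookup_mult_at_lead[OF V, of L \<beta>] by simp
qed

text \<open>If \<open>A \<equiv> V \<cdot> L\<close> and the leading coefficient of \<open>V\<close> is a unit, then \<open>L\<close> vanishes above
  \<open>\<alpha>\<close>: at \<open>\<rho>\<close> plus the largest offending exponent, \<open>V \<cdot> L\<close> would have a coefficient that
  is nonzero modulo the relations, whereas \<open>A\<close> has none.\<close>
lemma Fk_zero_quotient_above_lead:
  assumes V: "has_lead_term V \<rho> u" "u * u = 1" and A: "has_lead_term A (\<rho> + \<alpha>) c"
    and AVL: "Fk_zero k (A - V * L)" and e: "\<alpha> < e"
  shows "Poly_Mapping.lookup L e \<in> Fk_ideal k"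
proof (rule ccontr)
  assume "Poly_Mapping.lookup L e \<notin> Fk_ideal k"
  define S where "S = {f \<in> Poly_Mapping.keys L. \<alpha> < f \<and> Poly_Mapping.lookup L f \<notin> Fk_ideal k}"
  have "e \<in> S" using e \<open>_ \<notin> Fk_ideal k\<close> by (auto simp: S_def in_keys_iff Fk_ideal.zero)
  moreover have "finite S" by (simp add: S_def)
  ultimately have m: "Max S \<in> S" by (intro Max_in) auto
  have "Poly_Mapping.lookup L f \<in> Fk_ideal k" if f: "f \<in> Poly_Mapping.keys L" "Max S < f" for f
  proof (rule ccontr)
    assume "Poly_Mapping.lookup L f \<notin> Fk_ideal k"
    with f m have "f \<in> S" by (auto simp: S_def intro: order.strict_trans)
    then show False using Max_ge[OF \<open>finite S\<close>] f(2) by (simp add: leD)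
  qed
  then have "Poly_Mapping.lookup (V * L) (\<rho> + Max S) - u * Poly_Mapping.lookup L (Max S) \<in> Fk_ideal k"
    by (rule lookup_mult_at_lead_mod[OF V(1)])
  moreover have "Poly_Mapping.lookup A (\<rho> + Max S) = 0"
    using m by (intro has_lead_term_zero_above[OF A]) (simp add: S_def)
  then have "- Poly_Mapping.lookup (V * L) (\<rho> + Max S) \<in> Fk_ideal k"
    using AVL unfolding Fk_zero_def lookup_minus by (metis diff_0)
  then have "Poly_Mapping.lookup (V * L) (\<rho> + Max S) \<in> Fk_ideal k"
    using Fk_ideal_uminus by fastforce
  ultimately have "u * Poly_Mapping.lookup L (Max S) \<in> Fk_ideal k"
    using Fk_ideal_diff by fastforce
  then show False using Fk_ideal_cancel_unit[OF V(2)] m by (simp add: S_def)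
qed

lemma Fk_zero_quotient_lead_coeff:
  assumes V: "has_lead_term V \<rho> u" "u * u = 1" and A: "has_lead_term A (\<rho> + \<alpha>) (u * a)"
    and AVL: "Fk_zero k (A - V * L)"
  shows "Poly_Mapping.lookup L \<alpha> - a \<in> Fk_ideal k"
proof -
  have "Poly_Mapping.lookup (V * L) (\<rho> + \<alpha>) - u * Poly_Mapping.lookup L \<alpha> \<in> Fk_ideal k"
    using Fk_zero_quotient_above_lead[OF V A AVL] by (rule lookup_mult_at_lead_mod[OF V(1)])
  moreover have "u * a - Poly_Mapping.lookup (V * L) (\<rho> + \<alpha>) \<in> Fk_ideal k"
    using AVL has_lead_term_lookup[OF A] unfolding Fk_zero_def lookup_minus by metis
  ultimately have "u * (Poly_Mapping.lookup L \<alpha> - a) \<in> Fk_ideal k"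
    using Fk_ideal.add Fk_ideal_uminus by (fastforce simp: algebra_simps)
  then show ?thesis by (rule Fk_ideal_cancel_unit[OF V(2)])
qed

definition pm_below :: "'a::linorder \<Rightarrow> ('a \<Rightarrow>\<^sub>0 'b::comm_monoid_add) \<Rightarrow> ('a \<Rightarrow>\<^sub>0 'b)" where
  "pm_below \<alpha> L = (\<Sum>e\<in>{e \<in> Poly_Mapping.keys L. e < \<alpha>}. Poly_Mapping.single e (Poly_Mapping.lookup L e))"

lemma lookup_pm_below: "Poly_Mapping.lookup (pm_below \<alpha> L) e = (if e < \<alpha> then Poly_Mapping.lookup L e else 0)"
  unfolding pm_below_def lookup_sum lookup_single by (simp add: when_def in_keys_iff)

lemma keys_pm_below: "Poly_Mapping.keys (pm_below \<alpha> L) \<subseteq> {e \<in> Poly_Mapping.keys L. e < \<alpha>}"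
  by (auto simp: in_keys_iff lookup_pm_below split: if_splits)

lemma Fk_zero_quotient_minus_lead_and_below:
  assumes dec: "\<And>i j. 1 \<le> i \<Longrightarrow> i \<le> j \<Longrightarrow> j \<le> k \<Longrightarrow> n j \<le> n i"
    and AVL: "Fk_zero k (alternant k n - vandermonde k * L)"
  shows "Fk_zero k (L - (zmono k n * const (lead_coeff_shuffle k n) + pm_below (zexp k n) L))"
  unfolding Fk_zero_def
proof
  fix e
  let ?u = "(- 1) ^ card (pairs k) :: dpoly"
  have V: "has_lead_term (vandermonde k) (rho k) ?u" "?u * ?u = 1"
    by (simp_all add: has_lead_term_vandermonde flip: power_add)
  have A: "has_lead_term (alternant k n) (rho k + zexp k n) (?u * lead_coeff_shuffle k n)"
    using has_lead_term_alternant[OF dec] by (simp add: add.commute)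
  have lead: "Poly_Mapping.lookup (zmono k n * const (lead_coeff_shuffle k n)) x =
      (if x = zexp k n then lead_coeff_shuffle k n else 0)" for x
    by (simp add: zmono_def const_def mult_single lookup_single when_def eq_commute)
  consider "e < zexp k n" | "e = zexp k n" | "zexp k n < e" by fastforce
  then show "Poly_Mapping.lookup (L - (zmono k n * const (lead_coeff_shuffle k n) + pm_below (zexp k n) L)) e
      \<in> Fk_ideal k"
  proof cases
    case 1
    then have "e \<noteq> zexp k n" by simp
    with 1 show ?thesis by (simp add: lookup_minus lookup_add lead lookup_pm_below Fk_ideal.zero)
  next
    case 2
    then show ?thesis
      using Fk_zero_quotient_lead_coeff[OF V A AVL] by (simp add: lookup_minus lookup_add lead lookup_pm_below)
  next
    case 3
    then have "e \<noteq> zexp k n" "\<not> e < zexp k n" by auto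
    then show ?thesis
      using Fk_zero_quotient_above_lead[OF V A AVL 3] by (simp add: lookup_minus lookup_add lead lookup_pm_below)
  qed
qed

lemma lex_less_of_less:
  assumes "Poly_Mapping.keys e \<subseteq> {1..k}" "e < zexp k n"
  shows "lex_less k e n"
proof -
  obtain x where x: "Poly_Mapping.lookup e x < Poly_Mapping.lookup (zexp k n) x"
      "\<forall>y<x. Poly_Mapping.lookup e y = Poly_Mapping.lookup (zexp k n) y"
    using assms(2) unfolding less_poly_mapping.rep_eq less_fun_def by blast
  have "x \<in> {1..k}"
  proof (rule ccontr)
    assume "x \<notin> {1..k}"
    then have "Poly_Mapping.lookup e x = 0" "Poly_Mapping.lookup (zexp k n) x = 0"
      using assms(1) by (auto simp: in_keys_iff lookup_zexp)
    then show False using x(1) by simp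
  qed
  then show ?thesis
    unfolding lex_less_def using x by (intro bexI[of _ x]) (auto simp: lookup_zexp)
qed

section \<open>The shuffle product as a quotient by the Vandermonde product\<close>

lemma prod_inversion_sign_remove:
  assumes "finite P" "\<sigma> \<in> P"
  shows "(\<Prod>\<tau>\<in>P - {\<sigma>}. inversion_sign k \<tau> :: 'a::comm_ring_1) = inversion_sign k \<sigma> * (\<Prod>\<tau>\<in>P. inversion_sign k \<tau>)"
proof -
  have "inversion_sign k \<sigma> * (\<Prod>\<tau>\<in>P. inversion_sign k \<tau> :: 'a) =
      (inversion_sign k \<sigma> * inversion_sign k \<sigma>) * (\<Prod>\<tau>\<in>P - {\<sigma>}. inversion_sign k \<tau>)"
    using prod.remove[OF assms, of "inversion_sign k :: _ \<Rightarrow> 'a"] by (simp add: mult.assoc)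
  then show ?thesis by (simp add: inversion_sign_square)
qed

lemma shuffle_monomials_eq_alternant_over_vandermonde:
  "\<exists>D. shuffle_monomials k n = (D * alternant k n, D * vandermonde k)"
proof -
  let ?P = "perms k"
  define m where "m = card ?P"
  have "?P \<noteq> {}" using permutes_id by blast
  then have m: "m = Suc (m - 1)" using finite_perms by (simp add: m_def card_gt_0_iff)
  define D where "D = (\<Prod>\<tau>\<in>?P. inversion_sign k \<tau>) * vandermonde k ^ (m - 1)"
  have zetas: "(\<Prod>x\<in>pairs k. fst (case x of (i, j) \<Rightarrow> zeta i j)) = (\<Prod>p\<in>pairs k. zeta_num (fst p) (snd p))"
      "(\<Prod>x\<in>pairs k. snd (case x of (i, j) \<Rightarrow> zeta i j)) = vandermonde k"
    unfolding vandermonde_def vandermonde_on_def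
    by (auto intro!: prod.cong simp: zeta_def zeta_num_def split: prod.splits)
  have "shuffle_monomials k n =
     ((\<Sum>\<sigma>\<in>?P. act \<sigma> (shuffle_numerator k n) * (\<Prod>\<tau>\<in>?P - {\<sigma>}. act \<tau> (vandermonde k))),
      (\<Prod>\<tau>\<in>?P. act \<tau> (vandermonde k)))"
    unfolding shuffle_monomials_def Sym_def frac_sum_def frac_mult_def frac_of_def frac_prod_def act_frac_def
    by (simp add: zetas shuffle_numerator_def)
  also have "(\<Sum>\<sigma>\<in>?P. act \<sigma> (shuffle_numerator k n) * (\<Prod>\<tau>\<in>?P - {\<sigma>}. act \<tau> (vandermonde k))) =
      (\<Sum>\<sigma>\<in>?P. act \<sigma> (shuffle_numerator k n) * (inversion_sign k \<sigma> * D))"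
  proof (rule sum.cong[OF refl])
    fix \<sigma> assume \<sigma>: "\<sigma> \<in> ?P"
    have "(\<Prod>\<tau>\<in>?P - {\<sigma>}. act \<tau> (vandermonde k)) = (\<Prod>\<tau>\<in>?P - {\<sigma>}. inversion_sign k \<tau> * vandermonde k)"
      by (rule prod.cong) (auto simp: act_vandermonde)
    also have "\<dots> = inversion_sign k \<sigma> * D"
      using finite_perms \<sigma> by (simp add: prod.distrib m_def card_Diff_singleton prod_inversion_sign_remove D_def mult.assoc)
    finally show "act \<sigma> (shuffle_numerator k n) * (\<Prod>\<tau>\<in>?P - {\<sigma>}. act \<tau> (vandermonde k)) =
        act \<sigma> (shuffle_numerator k n) * (inversion_sign k \<sigma> * D)" by simp
  qed
  also have "\<dots> = D * alternant k n"
    by (simp add: alternant_def sum_distrib_left algebra_simps)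
  also have "(\<Prod>\<tau>\<in>?P. act \<tau> (vandermonde k)) = (\<Prod>\<tau>\<in>?P. inversion_sign k \<tau> * vandermonde k)"
    by (rule prod.cong) (auto simp: act_vandermonde)
  also have "\<dots> = (\<Prod>\<tau>\<in>?P. inversion_sign k \<tau>) * vandermonde k ^ m"
    by (simp add: prod.distrib m_def)
  also have "\<dots> = D * vandermonde k"
    by (subst (1) m) (simp add: D_def power_Suc2 mult.assoc)
  finally show ?thesis by blast
qed

lemma shuffle_monomials_frac_eq:
  assumes "Fk_zero k (alternant k n - vandermonde k * L)"
  shows "frac_eq k (shuffle_monomials k n) (frac_of L)"
proof -
  obtain D where D: "shuffle_monomials k n = (D * alternant k n, D * vandermonde k)"
    using shuffle_monomials_eq_alternant_over_vandermonde by blast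
  have "D * alternant k n * 1 - L * (D * vandermonde k) = D * (alternant k n - vandermonde k * L)"
    by (simp add: algebra_simps)
  then show ?thesis
    unfolding frac_eq_def Fk_eq_Fk_zero D frac_of_def using Fk_zero_mult_left[OF assms] by simp
qed

theorem proposition4p6:
  fixes k :: nat and n :: "nat \<Rightarrow> int"
  assumes "\<And>i j. 1 \<le> i \<Longrightarrow> i \<le> j \<Longrightarrow> j \<le> k \<Longrightarrow> n j \<le> n i"
  shows "\<exists>R :: lpoly.
           (\<forall>e\<in>Poly_Mapping.keys R. Poly_Mapping.keys e \<subseteq> {1..k} \<and> lex_less k e n \<and> in_Fk k (Poly_Mapping.lookup R e)) \<and>
           frac_eq k (shuffle_monomials k n)
             (frac_of (zmono k n * const (lead_coeff_shuffle k n) + R))"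
proof -
  obtain L where L: "Fk_laurent k L" "Fk_zero k (alternant k n - vandermonde k * L)"
    using vandermonde_on_quotient[OF Fk_laurent_alternant alternant_vanishes_on_diagonal order.refl]
    unfolding vandermonde_def by blast
  define R where "R = pm_below (zexp k n) L"
  let ?L' = "zmono k n * const (lead_coeff_shuffle k n) + R"
  have "Fk_zero k (L - ?L')"
    unfolding R_def using Fk_zero_quotient_minus_lead_and_below[OF assms L(2)] .
  then have "Fk_zero k ((alternant k n - vandermonde k * L) + vandermonde k * (L - ?L'))"
    by (intro Fk_zero_add L(2) Fk_zero_mult_left)
  then have "frac_eq k (shuffle_monomials k n) (frac_of ?L')"
    by (intro shuffle_monomials_frac_eq) (simp add: algebra_simps)
  moreover have "Poly_Mapping.keys e \<subseteq> {1..k} \<and> lex_less k e n \<and> in_Fk k (Poly_Mapping.lookup R e)"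
    if "e \<in> Poly_Mapping.keys R" for e
  proof -
    have e: "e \<in> Poly_Mapping.keys L" "e < zexp k n"
      using that keys_pm_below by (auto simp: R_def)
    then show ?thesis
      using Fk_laurent_keys[OF L(1) e(1)] Fk_laurent_lookup[OF L(1)] lex_less_of_less
      by (simp add: R_def lookup_pm_below)
  qed
  ultimately show ?thesis by blast
qed

end
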